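(* Let ${}_{\mathfrak Y}\mathfrak B_{\mathfrak X}$ be a left-free graph of bisets, and let $\dagger\in\mathfrak Y$, $*\in\mathfrak X$ be vertices. Then $\pi_1(\mathfrak B,\dagger,* )$ is a left-free biset, of degree (number of left orbits) equal to that of $\bigsqcup_{z\in\rho^{-1}( * )}B_z$.
   Context: Graphs and graphs of groups. A graph is a set $V\sqcup E$ with $x\mapsto x^-\in V$, $x\mapsto\bar x$, $\bar{\bar x}=x$, $x=x^-\iff x=\bar x\iff x\in V$; $x^+=(\bar x)^-$. Graph morphisms commute with these (may send edges to vertices); simplicial ones send edges to edges. A graph of groups is a connected graph with groups $G_x$ and homomorphisms $g\mapsto g^-\colon G_x\to G_{x^-}$, $g\mapsto\bar g\colon G_x\to G_{\bar x}$ ($G_x\to G_{\bar x}\to G_x$ identity, both identity for vertices); fundamental groupoid $\pi_1(\mathfrak X)$: objects $V$, generated by the $x\in\mathfrak X$ and elements of the $G_v$, relations of the $G_v$, $v=1\in G_v$, $x\bar x=1$, $g^-x=xg^+$ ($g^+=(\bar g)^-$); $\pi_1(\mathfrak X,v,w)$ = morphisms from $v$ to $w$. Graphs of bisets: a graph $\mathfrak B$, graph morphisms $\lambda\colon\mathfrak B\to\mathfrak Y$, $\rho\colon\mathfrak B\to\mathfrak X$, $G_{\lambda(z)}$-$G_{\rho(z)}$-bisets $B_z$ and congruences $b\mapsto b^-\colon B_z\to B_{z^-}$, $b\mapsto\bar b\colon B_z\to B_{\bar z}$ (same axioms), $b^+=(\bar b)^-$. Fundamental biset $\pi_1(\mathfrak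 B,\dagger,* )$: $\bigsqcup_{z\in V(\mathfrak B)}\pi_1(\mathfrak Y,\dagger,\lambda(z))\otimes_{G_{\lambda(z)}}B_z\otimes_{G_{\rho(z)}}\pi_1(\mathfrak X,\rho(z),* )$ modulo $q\otimes b^-\otimes p=q\lambda(z)\otimes b^+\otimes\overline{\rho(z)}p$ for edges $z$ ($\lambda(z),\overline{\rho(z)}$ as groupoid morphisms, trivial if vertices), a $\pi_1(\mathfrak Y,\dagger)$-$\pi_1(\mathfrak X,* )$-biset. Left-fibrant: $\rho$ simplicial and for every vertex $v\in\mathfrak B$ and edge $f\in\mathfrak X$ with $f^-=\rho(v)$, the map $\bigsqcup_{e\in\rho^{-1}(f),\,e^-=v}G_{\lambda(v)}\otimes_{G_{\lambda(e)}}B_e\to B_v$, $g\otimes b\mapsto gb^-$, is an isomorphism of $G_{\lambda(v)}$-$G_f$-bisets. Left-free: left-fibrant and every $B_z$ free as a left $G_{\lambda(z)}$-set. *)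

theory Defs
  imports "HOL-Algebra.Group" "HOL-Library.Equipollence"
begin

text \<open>A graph is a set (vertices and edges together) with maps x -> x^- and x -> bar x.\<close>
record 'x graph =
  gel  :: "'x set"
  gsrc :: "'x \<Rightarrow> 'x"
  grev :: "'x \<Rightarrow> 'x"

definition is_graph :: "('x,'m) graph_scheme \<Rightarrow> bool" where
  "is_graph X \<longleftrightarrow> (\<forall>x\<in>gel X. gsrc X x \<in> gel X \<and> grev X x \<in> gel X
      \<and> grev X (grev X x) = x
      \<and> gsrc X (gsrc X x) = gsrc X x
      \<and> (x = gsrc X x \<longleftrightarrow> x = grev X x))"

definition gverts :: "('x,'m) graph_scheme \<Rightarrow> 'x set" where
  "gverts X = {x \<in> gel X. gsrc X x = x}"

definition gedges :: "('x,'m) graph_scheme \<Rightarrow> 'x set" where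
  "gedges X = {x \<in> gel X. gsrc X x \<noteq> x}"

definition gtgt :: "('x,'m) graph_scheme \<Rightarrow> 'x \<Rightarrow> 'x" where
  "gtgt X x = gsrc X (grev X x)"

definition graph_morphism :: "('z,'m) graph_scheme \<Rightarrow> ('x,'n) graph_scheme \<Rightarrow> ('z \<Rightarrow> 'x) \<Rightarrow> bool" where
  "graph_morphism B X f \<longleftrightarrow> (\<forall>z\<in>gel B. f z \<in> gel X
      \<and> f (gsrc B z) = gsrc X (f z) \<and> f (grev B z) = grev X (f z))"

definition simplicial :: "('z,'m) graph_scheme \<Rightarrow> ('x,'n) graph_scheme \<Rightarrow> ('z \<Rightarrow> 'x) \<Rightarrow> bool" where
  "simplicial B X f \<longleftrightarrow> graph_morphism B X f \<and> (\<forall>z\<in>gedges B. f z \<in> gedges X)"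

text \<open>ggrp x is the group G_x; ghm x is g -> g^- : G_x -> G_{x^-}; gbr x is g -> bar g : G_x -> G_{bar x}.\<close>
record ('x,'g) gog = "'x graph" +
  ggrp :: "'x \<Rightarrow> 'g monoid"
  ghm  :: "'x \<Rightarrow> 'g \<Rightarrow> 'g"
  gbr  :: "'x \<Rightarrow> 'g \<Rightarrow> 'g"

datatype ('x,'g) letter = Edg 'x | Elt 'x 'g

text \<open>ok X v w u: the word w is a well-formed morphism from v to u.\<close>
fun ok :: "('x,'g) gog \<Rightarrow> 'x \<Rightarrow> ('x,'g) letter list \<Rightarrow> 'x \<Rightarrow> bool" where
  "ok X v [] u = (v \<in> gverts X \<and> v = u)"
| "ok X v (Edg x # ws) u = (x \<in> gedges X \<and> gsrc X x = v \<and> ok X (gtgt X x) ws u)"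
| "ok X v (Elt y g # ws) u = (v \<in> gverts X \<and> y = v \<and> g \<in> carrier (ggrp X v) \<and> ok X v ws u)"

definition connected :: "('x,'g) gog \<Rightarrow> bool" where
  "connected X \<longleftrightarrow> (\<forall>v\<in>gverts X. \<forall>u\<in>gverts X. \<exists>ws. ok X v ws u)"

definition is_gog :: "('x,'g) gog \<Rightarrow> bool" where
  "is_gog X \<longleftrightarrow> is_graph X \<and> connected X \<and>
    (\<forall>x\<in>gel X. group (ggrp X x)
       \<and> ghm X x \<in> hom (ggrp X x) (ggrp X (gsrc X x))
       \<and> gbr X x \<in> hom (ggrp X x) (ggrp X (grev X x))
       \<and> (\<forall>g\<in>carrier (ggrp X x). gbr X (grev X x) (gbr X x g) = g)) \<and>
    (\<forall>v\<in>gverts X. \<forall>g\<in>carrier (ggrp X v). ghm X v g = g \<and> gbr X v g = g)"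

text \<open>Defining relations of the fundamental groupoid (as rewrite rules on words).\<close>
inductive grel :: "('x,'g) gog \<Rightarrow> ('x,'g) letter list \<Rightarrow> ('x,'g) letter list \<Rightarrow> bool"
  for X where
  mult: "v \<in> gverts X \<Longrightarrow> g \<in> carrier (ggrp X v) \<Longrightarrow> h \<in> carrier (ggrp X v) \<Longrightarrow>
     grel X [Elt v g, Elt v h] [Elt v (g \<otimes>\<^bsub>ggrp X v\<^esub> h)]"
| unit: "v \<in> gverts X \<Longrightarrow> grel X [Elt v \<one>\<^bsub>ggrp X v\<^esub>] []"
| inv: "x \<in> gedges X \<Longrightarrow> grel X [Edg x, Edg (grev X x)] []"
| edge: "x \<in> gedges X \<Longrightarrow> g \<in> carrier (ggrp X x) \<Longrightarrow>
     grel X [Elt (gsrc X x) (ghm X x g), Edg x]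
            [Edg x, Elt (gtgt X x) (ghm X (grev X x) (gbr X x g))]"

definition wstep :: "('x,'g) gog \<Rightarrow> 'x \<Rightarrow> ('x,'g) letter list \<Rightarrow> ('x,'g) letter list \<Rightarrow> bool" where
  "wstep X v a b \<longleftrightarrow> (\<exists>u l r w. grel X l r \<and> a = u @ l @ w \<and> b = u @ r @ w)
      \<and> (\<exists>t. ok X v a t) \<and> (\<exists>t. ok X v b t)"

text \<open>Equality of morphisms of the fundamental groupoid with source v.\<close>
definition weq :: "('x,'g) gog \<Rightarrow> 'x \<Rightarrow> ('x,'g) letter list \<Rightarrow> ('x,'g) letter list \<Rightarrow> bool" where
  "weq X v = (\<lambda>a b. wstep X v a b \<or> wstep X v b a)\<^sup>*\<^sup>*"

definition gword :: "('x,'g) gog \<Rightarrow> 'x \<Rightarrow> ('x,'g) letter list" where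
  "gword X x = (if gsrc X x = x then [] else [Edg x])"

definition is_biset :: "'g monoid \<Rightarrow> 'h monoid \<Rightarrow> 'b set \<Rightarrow> ('g \<Rightarrow> 'b \<Rightarrow> 'b) \<Rightarrow> ('b \<Rightarrow> 'h \<Rightarrow> 'b) \<Rightarrow> bool" where
  "is_biset G H S l r \<longleftrightarrow>
    (\<forall>g\<in>carrier G. \<forall>b\<in>S. l g b \<in> S) \<and> (\<forall>b\<in>S. l \<one>\<^bsub>G\<^esub> b = b) \<and>
    (\<forall>g\<in>carrier G. \<forall>g'\<in>carrier G. \<forall>b\<in>S. l (g \<otimes>\<^bsub>G\<^esub> g') b = l g (l g' b)) \<and>
    (\<forall>h\<in>carrier H. \<forall>b\<in>S. r b h \<in> S) \<and> (\<forall>b\<in>S. r b \<one>\<^bsub>H\<^esub> = b) \<and>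
    (\<forall>h\<in>carrier H. \<forall>h'\<in>carrier H. \<forall>b\<in>S. r b (h \<otimes>\<^bsub>H\<^esub> h') = r (r b h) h') \<and>
    (\<forall>g\<in>carrier G. \<forall>h\<in>carrier H. \<forall>b\<in>S. l g (r b h) = r (l g b) h)"

text \<open>A graph of bisets over Y (left) and X (right): the graph bgr, morphisms lam and rho,
  bisets bset z with left action bl z and right action br z, and congruences
  bm z : b -> b^- and bb z : b -> bar b.\<close>
record ('z,'y,'x,'b,'g,'h) gob =
  bgr  :: "'z graph"
  lam  :: "'z \<Rightarrow> 'y"
  rho  :: "'z \<Rightarrow> 'x"
  bset :: "'z \<Rightarrow> 'b set"
  bl   :: "'z \<Rightarrow> 'g \<Rightarrow> 'b \<Rightarrow> 'b"
  br   :: "'z \<Rightarrow> 'b \<Rightarrow> 'h \<Rightarrow> 'b"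
  bm   :: "'z \<Rightarrow> 'b \<Rightarrow> 'b"
  bb   :: "'z \<Rightarrow> 'b \<Rightarrow> 'b"

definition is_gob :: "('y,'g) gog \<Rightarrow> ('x,'h) gog \<Rightarrow> ('z,'y,'x,'b,'g,'h) gob \<Rightarrow> bool" where
  "is_gob Y X B \<longleftrightarrow> is_graph (bgr B) \<and>
    graph_morphism (bgr B) Y (lam B) \<and> graph_morphism (bgr B) X (rho B) \<and>
    (\<forall>z\<in>gel (bgr B).
       is_biset (ggrp Y (lam B z)) (ggrp X (rho B z)) (bset B z) (bl B z) (br B z)
     \<and> (\<forall>b\<in>bset B z. bm B z b \<in> bset B (gsrc (bgr B) z) \<and> bb B z b \<in> bset B (grev (bgr B) z)
          \<and> bb B (grev (bgr B) z) (bb B z b) = b)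
     \<and> (\<forall>g\<in>carrier (ggrp Y (lam B z)). \<forall>b\<in>bset B z.
          bm B z (bl B z g b) = bl B (gsrc (bgr B) z) (ghm Y (lam B z) g) (bm B z b)
        \<and> bb B z (bl B z g b) = bl B (grev (bgr B) z) (gbr Y (lam B z) g) (bb B z b))
     \<and> (\<forall>h\<in>carrier (ggrp X (rho B z)). \<forall>b\<in>bset B z.
          bm B z (br B z b h) = br B (gsrc (bgr B) z) (bm B z b) (ghm X (rho B z) h)
        \<and> bb B z (br B z b h) = br B (grev (bgr B) z) (bb B z b) (gbr X (rho B z) h))) \<and>
    (\<forall>v\<in>gverts (bgr B). \<forall>b\<in>bset B v. bm B v b = b \<and> bb B v b = b)"

text \<open>Left-fibrant: rho simplicial, and for every vertex v and edge f with f^- = rho v the map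
  from the disjoint union over e in rho^-1(f), e^- = v, of G_{lam v} (x)_{G_{lam e}} B_e to B_v,
  g (x) b -> g b^-, is bijective (equivalently an isomorphism of bisets, equivariance being
  automatic).  In G_{lam v} (x)_{G_{lam e}} B_e, (g k^-, b) = (g, k b) for k in G_{lam e}.\<close>
definition left_fibrant :: "('y,'g) gog \<Rightarrow> ('x,'h) gog \<Rightarrow> ('z,'y,'x,'b,'g,'h) gob \<Rightarrow> bool" where
  "left_fibrant Y X B \<longleftrightarrow> simplicial (bgr B) X (rho B) \<and>
    (\<forall>v\<in>gverts (bgr B). \<forall>f\<in>gedges X. gsrc X f = rho B v \<longrightarrow>
      (let Es = {e\<in>gedges (bgr B). rho B e = f \<and> gsrc (bgr B) e = v};
           Gv = ggrp Y (lam B v) in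
       (\<forall>c\<in>bset B v. \<exists>e\<in>Es. \<exists>g\<in>carrier Gv. \<exists>b\<in>bset B e. c = bl B v g (bm B e b)) \<and>
       (\<forall>e\<in>Es. \<forall>e'\<in>Es. \<forall>g\<in>carrier Gv. \<forall>g'\<in>carrier Gv. \<forall>b\<in>bset B e. \<forall>b'\<in>bset B e'.
          bl B v g (bm B e b) = bl B v g' (bm B e' b') \<longrightarrow>
          e = e' \<and> (\<exists>k\<in>carrier (ggrp Y (lam B e)).
                      g = g' \<otimes>\<^bsub>Gv\<^esub> ghm Y (lam B e) k \<and> b' = bl B e k b))))"

definition left_free_gob :: "('y,'g) gog \<Rightarrow> ('x,'h) gog \<Rightarrow> ('z,'y,'x,'b,'g,'h) gob \<Rightarrow> bool" where
  "left_free_gob Y X B \<longleftrightarrow> left_fibrant Y X B \<and>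
    (\<forall>z\<in>gel (bgr B). \<forall>g\<in>carrier (ggrp Y (lam B z)). \<forall>b\<in>bset B z.
        bl B z g b = b \<longrightarrow> g = \<one>\<^bsub>ggrp Y (lam B z)\<^esub>)"

type_synonym ('z,'y,'x,'b,'g,'h) brep =
  "('y,'g) letter list \<times> 'z \<times> 'b \<times> ('x,'h) letter list"

text \<open>Representatives q (x) b (x) p with z a vertex, q in pi1(Y,dag,lam z), b in B_z,
  p in pi1(X,rho z,st).\<close>
definition brep_ok :: "('y,'g) gog \<Rightarrow> ('x,'h) gog \<Rightarrow> ('z,'y,'x,'b,'g,'h) gob \<Rightarrow> 'y \<Rightarrow> 'x
    \<Rightarrow> ('z,'y,'x,'b,'g,'h) brep \<Rightarrow> bool" where
  "brep_ok Y X B dag st t \<longleftrightarrow> (case t of (q, z, b, p) \<Rightarrow>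
     z \<in> gverts (bgr B) \<and> ok Y dag q (lam B z) \<and> b \<in> bset B z \<and> ok X (rho B z) p st)"

inductive bstep_raw :: "('y,'g) gog \<Rightarrow> ('x,'h) gog \<Rightarrow> ('z,'y,'x,'b,'g,'h) gob \<Rightarrow> 'y
    \<Rightarrow> ('z,'y,'x,'b,'g,'h) brep \<Rightarrow> ('z,'y,'x,'b,'g,'h) brep \<Rightarrow> bool"
  for Y X B dag where
  left_word: "wstep Y dag q q' \<Longrightarrow> bstep_raw Y X B dag (q, z, b, p) (q', z, b, p)"
| right_word: "wstep X (rho B z) p p' \<Longrightarrow> bstep_raw Y X B dag (q, z, b, p) (q, z, b, p')"
| left_tensor: "g \<in> carrier (ggrp Y (lam B z)) \<Longrightarrow>
    bstep_raw Y X B dag (q @ [Elt (lam B z) g], z, b, p) (q, z, bl B z g b, p)"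
| right_tensor: "h \<in> carrier (ggrp X (rho B z)) \<Longrightarrow>
    bstep_raw Y X B dag (q, z, br B z b h, p) (q, z, b, Elt (rho B z) h # p)"
| edge: "z \<in> gedges (bgr B) \<Longrightarrow> b \<in> bset B z \<Longrightarrow>
    bstep_raw Y X B dag (q, gsrc (bgr B) z, bm B z b, p)
      (q @ gword Y (lam B z), gtgt (bgr B) z, bm B (grev (bgr B) z) (bb B z b),
       gword X (grev X (rho B z)) @ p)"

definition bstep where
  "bstep Y X B dag st t t' \<longleftrightarrow> bstep_raw Y X B dag t t'
     \<and> brep_ok Y X B dag st t \<and> brep_ok Y X B dag st t'"

text \<open>Equality in the fundamental biset pi1(B,dag,st).\<close>
definition beq where
  "beq Y X B dag st = (\<lambda>t t'. bstep Y X B dag st t t' \<or> bstep Y X B dag st t' t)\<^sup>*\<^sup>*"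

definition bact :: "('y,'g) letter list \<Rightarrow> ('z,'y,'x,'b,'g,'h) brep \<Rightarrow> ('z,'y,'x,'b,'g,'h) brep" where
  "bact \<gamma> t = (case t of (q, z, b, p) \<Rightarrow> (\<gamma> @ q, z, b, p))"

definition fbiset_left_free where
  "fbiset_left_free Y X B dag st \<longleftrightarrow>
    (\<forall>\<gamma> t. ok Y dag \<gamma> dag \<longrightarrow> brep_ok Y X B dag st t \<longrightarrow>
       beq Y X B dag st (bact \<gamma> t) t \<longrightarrow> weq Y dag \<gamma> [])"

definition fbiset_orbits where
  "fbiset_orbits Y X B dag st =
     {t. brep_ok Y X B dag st t} //
     {(t, t'). brep_ok Y X B dag st t \<and> brep_ok Y X B dag st t' \<and>
        (\<exists>\<gamma>. ok Y dag \<gamma> dag \<and> beq Y X B dag st (bact \<gamma> t) t')}"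

definition fiber_orbits where
  "fiber_orbits Y X B st =
     (SIGMA z:{z\<in>gel (bgr B). rho B z = st}.
        bset B z // {(b, b'). b \<in> bset B z \<and> b' \<in> bset B z \<and>
                        (\<exists>g\<in>carrier (ggrp Y (lam B z)). b' = bl B z g b)})"

end

theory Submission
  imports Defs
begin

text \<open>
  Every element of pi1(B, dag, st) is represented by q (x) b (x) p with p a word in the
  fundamental groupoid of X. Left fibrancy lets us move p across b letter by letter: a vertex
  group element acts on b from the right, and an edge f leaving rho z is crossed by writing
  b = g c^- along the unique edge e of B over f and using q (x) c^- = q lam(e) (x) c^+.
  The result is a normal form q' (x) b' (x) 1 with rho z' = st, and the resulting map
  pi1(B, dag, st) \<rightarrow> \<Squnion>_{z over st} pi1(Y, dag, lam z) (x) B_z is well defined because every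
  defining relation of pi1(B, dag, st) and of pi1(X) is respected up to equality in the tensor
  product. Hence pi1(Y, dag) acts freely when each B_z is left free, and its orbits are the
  left orbits of the B_z with z over st.
\<close>

lemma verts_in_el: "x \<in> gverts X \<Longrightarrow> x \<in> gel X"
  and edges_in_el: "x \<in> gedges X \<Longrightarrow> x \<in> gel X"
  and vert_src: "x \<in> gverts X \<Longrightarrow> gsrc X x = x"
  and el_vert_or_edge: "x \<in> gel X \<Longrightarrow> x \<in> gverts X \<or> x \<in> gedges X"
  unfolding gverts_def gedges_def by auto

context
  fixes X :: "('x,'m) graph_scheme"
  assumes graph: "is_graph X"
begin

lemma src_in_verts: "x \<in> gel X \<Longrightarrow> gsrc X x \<in> gverts X"
  and rev_in_el: "x \<in> gel X \<Longrightarrow> grev X x \<in> gel X"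
  and rev_rev: "x \<in> gel X \<Longrightarrow> grev X (grev X x) = x"
  and rev_vert: "x \<in> gverts X \<Longrightarrow> grev X x = x"
  using graph unfolding is_graph_def gverts_def by auto

lemma tgt_in_verts: "x \<in> gel X \<Longrightarrow> gtgt X x \<in> gverts X"
  unfolding gtgt_def by (simp add: rev_in_el src_in_verts)

lemma tgt_rev: "x \<in> gel X \<Longrightarrow> gtgt X (grev X x) = gsrc X x"
  unfolding gtgt_def by (simp add: rev_rev)

lemma tgt_vert: "v \<in> gverts X \<Longrightarrow> gtgt X v = v"
  unfolding gtgt_def by (simp add: rev_vert vert_src)

lemma rev_in_edges: assumes "x \<in> gedges X" shows "grev X x \<in> gedges X"
proof -
  have x: "x \<in> gel X" "gsrc X x \<noteq> x" using assms unfolding gedges_def by auto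
  have "grev X x \<noteq> gsrc X (grev X x)"
    using graph x rev_in_el rev_rev unfolding is_graph_def by metis
  then show ?thesis using x rev_in_el unfolding gedges_def by auto
qed

end

lemma morphism_el: "graph_morphism B X f \<Longrightarrow> z \<in> gel B \<Longrightarrow> f z \<in> gel X"
  and morphism_src: "graph_morphism B X f \<Longrightarrow> z \<in> gel B \<Longrightarrow> f (gsrc B z) = gsrc X (f z)"
  and morphism_rev: "graph_morphism B X f \<Longrightarrow> z \<in> gel B \<Longrightarrow> f (grev B z) = grev X (f z)"
  unfolding graph_morphism_def by auto

lemma morphism_vert: "graph_morphism B X f \<Longrightarrow> z \<in> gverts B \<Longrightarrow> f z \<in> gverts X"
  unfolding graph_morphism_def gverts_def by auto

lemma morphism_tgt:
  "graph_morphism B X f \<Longrightarrow> is_graph B \<Longrightarrow> z \<in> gel B \<Longrightarrow> f (gtgt B z) = gtgt X (f z)"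
  unfolding gtgt_def by (simp add: morphism_rev morphism_src rev_in_el)

lemma ok_Nil [simp]: "ok X v [] u \<longleftrightarrow> u = v \<and> v \<in> gverts X"
  by auto

declare ok.simps(1) [simp del]

lemma ok_endpoints: "is_graph X \<Longrightarrow> ok X v a u \<Longrightarrow> v \<in> gverts X \<and> u \<in> gverts X"
proof (induction a arbitrary: v)
  case (Cons l a)
  then show ?case by (cases l) (auto intro: src_in_verts edges_in_el)
qed simp

lemma ok_append: "is_graph X \<Longrightarrow> ok X v (a @ c) u \<longleftrightarrow> (\<exists>w. ok X v a w \<and> ok X w c u)"
proof (induction a arbitrary: v)
  case Nil
  then show ?case using ok_endpoints by fastforce
next
  case (Cons l a)
  then show ?case by (cases l) auto
qed

lemma ok_source_unique: "ok X v a u \<Longrightarrow> ok X v' a u \<Longrightarrow> v = v'"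
  by (cases a rule: list.exhaust) (auto elim: ok.elims)

lemma ok_target_unique: "ok X v a u \<Longrightarrow> ok X v a u' \<Longrightarrow> u = u'"
proof (induction a arbitrary: v)
  case (Cons l a)
  then show ?case by (cases l) auto
qed simp

lemma gog_graph: "is_gog X \<Longrightarrow> is_graph X"
  and gog_group: "is_gog X \<Longrightarrow> x \<in> gel X \<Longrightarrow> group (ggrp X x)"
  and gog_hm: "is_gog X \<Longrightarrow> x \<in> gel X \<Longrightarrow> ghm X x \<in> hom (ggrp X x) (ggrp X (gsrc X x))"
  and gog_br: "is_gog X \<Longrightarrow> x \<in> gel X \<Longrightarrow> gbr X x \<in> hom (ggrp X x) (ggrp X (grev X x))"
  and gog_vert_maps:
    "is_gog X \<Longrightarrow> v \<in> gverts X \<Longrightarrow> g \<in> carrier (ggrp X v) \<Longrightarrow> ghm X v g = g \<and> gbr X v g = g"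
  unfolding is_gog_def by simp_all

lemma gog_hm_carrier:
  "is_gog X \<Longrightarrow> x \<in> gel X \<Longrightarrow> g \<in> carrier (ggrp X x) \<Longrightarrow> ghm X x g \<in> carrier (ggrp X (gsrc X x))"
  by (rule hom_in_carrier[OF gog_hm])

lemma gog_br_carrier:
  "is_gog X \<Longrightarrow> x \<in> gel X \<Longrightarrow> g \<in> carrier (ggrp X x) \<Longrightarrow> gbr X x g \<in> carrier (ggrp X (grev X x))"
  by (rule hom_in_carrier[OF gog_br])

lemma ok_gword: assumes "is_gog X" "x \<in> gel X" shows "ok X (gsrc X x) (gword X x) (gtgt X x)"
proof (cases "gsrc X x = x")
  case True
  then have "x \<in> gverts X" using assms(2) unfolding gverts_def by blast
  then show ?thesis using True tgt_vert[OF gog_graph[OF assms(1)]] unfolding gword_def by simp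
next
  case False
  then have "x \<in> gedges X" using assms(2) unfolding gedges_def by blast
  then show ?thesis using False tgt_in_verts[OF gog_graph[OF assms(1)] assms(2)] unfolding gword_def by simp
qed

section \<open>The fundamental groupoid\<close>

lemma weq_refl: "weq X v a a"
  unfolding weq_def by simp

lemma weq_sym: "weq X v a b \<Longrightarrow> weq X v b a"
  unfolding weq_def by (rule sympD[OF symp_rtranclp]) (auto simp: symp_def)

lemma weq_trans [trans]: "weq X v a b \<Longrightarrow> weq X v b c \<Longrightarrow> weq X v a c"
  unfolding weq_def by (rule rtranclp_trans)

context
  fixes X :: "('x,'g) gog"
  assumes gog: "is_gog X"
begin

private lemma graph: "is_graph X"
  using gog by (rule gog_graph)

lemma grel_ok: "grel X l r \<Longrightarrow> ok X v l u \<Longrightarrow> ok X v r u"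
proof (induction rule: grel.induct)
  case (mult w g h)
  then have "g \<otimes>\<^bsub>ggrp X w\<^esub> h \<in> carrier (ggrp X w)"
    using gog_group[OF gog verts_in_el[OF mult(1)]] by (simp add: group.is_monoid monoid.m_closed)
  with mult show ?case by (simp; blast)
next
  case (unit w)
  then show ?case by (simp; blast)
next
  case (inv x)
  then show ?case using tgt_rev[OF graph edges_in_el[OF inv(1)]] by (simp; blast)
next
  case (edge x g)
  have "ghm X (grev X x) (gbr X x g) \<in> carrier (ggrp X (gtgt X x))"
    using gog_hm_carrier[OF gog rev_in_el[OF graph]] gog_br_carrier[OF gog] edges_in_el[OF edge(1)] edge(2)
    unfolding gtgt_def by blast
  with edge show ?case by auto
qed

lemma wstep_ok_iff: assumes "wstep X v a b" shows "ok X v a t \<longleftrightarrow> ok X v b t"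
proof -
  obtain c l r w where rel: "grel X l r" and ab: "a = c @ l @ w" "b = c @ r @ w"
    using assms unfolding wstep_def by blast
  have forward: "ok X v b t'" if a_ok: "ok X v a t'" for t'
  proof -
    obtain m m' where "ok X v c m" "ok X m l m'" "ok X m' w t'"
      using a_ok ab ok_append[OF graph] by auto
    then show ?thesis using grel_ok[OF rel] ab ok_append[OF graph] by blast
  qed
  obtain t0 where "ok X v a t0" using assms unfolding wstep_def by blast
  then show ?thesis using forward ok_target_unique by (metis (full_types))
qed

lemma weq_ok: "weq X v a b \<Longrightarrow> ok X v a t \<Longrightarrow> ok X v b t"
  unfolding weq_def by (induction rule: rtranclp_induct) (use wstep_ok_iff in blast)+

lemma wstep_append:
  assumes "wstep X v a b" "ok X v a w" "ok X w s t" shows "wstep X v (a @ s) (b @ s)"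
proof -
  obtain c l r d where "grel X l r" "a = c @ l @ d" "b = c @ r @ d"
    using assms(1) unfolding wstep_def by blast
  moreover have "ok X v (a @ s) t" "ok X v (b @ s) t"
    using assms wstep_ok_iff ok_append[OF graph] by blast+
  ultimately show ?thesis unfolding wstep_def by (metis append.assoc)
qed

lemma weq_append:
  assumes "weq X v a b" "ok X v a w" "ok X w s t" shows "weq X v (a @ s) (b @ s)"
  using assms(1,2) unfolding weq_def
proof (induction rule: rtranclp_induct)
  case (step y z)
  have "ok X v y w" using step(1,4) weq_ok unfolding weq_def by blast
  moreover have "ok X v z w" using calculation step(2) wstep_ok_iff by blast
  ultimately have "wstep X v (y @ s) (z @ s) \<or> wstep X v (z @ s) (y @ s)"
    using step(2) wstep_append assms(3) by blast
  with step(3)[OF step(4)] show ?case by (rule rtranclp.rtrancl_into_rtrancl)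
qed simp

lemma weq_grel:
  assumes "grel X l r" "ok X v (c @ l @ d) t" shows "weq X v (c @ l @ d) (c @ r @ d)"
proof -
  obtain m m' where "ok X v c m" "ok X m l m'" "ok X m' d t"
    using assms(2) ok_append[OF graph] by auto
  then have "ok X v (c @ r @ d) t" using grel_ok[OF assms(1)] ok_append[OF graph] by blast
  with assms have "wstep X v (c @ l @ d) (c @ r @ d)" unfolding wstep_def by blast
  then show ?thesis unfolding weq_def by blast
qed

lemma weq_unit:
  assumes "ok X d w v" "ok X v s t" shows "weq X d (w @ Elt v \<one>\<^bsub>ggrp X v\<^esub> # s) (w @ s)"
proof -
  have v: "v \<in> gverts X" using ok_endpoints[OF graph assms(1)] by blast
  then have "\<one>\<^bsub>ggrp X v\<^esub> \<in> carrier (ggrp X v)"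
    using gog_group[OF gog verts_in_el] by (simp add: group.is_monoid monoid.one_closed)
  then have "ok X d (w @ [Elt v \<one>\<^bsub>ggrp X v\<^esub>] @ s) t" using assms v ok_append[OF graph] by auto
  from weq_grel[OF grel.unit[OF v] this] show ?thesis by simp
qed

lemma weq_mult:
  assumes "ok X d w v" "ok X v s t" "g \<in> carrier (ggrp X v)" "h \<in> carrier (ggrp X v)"
  shows "weq X d (w @ Elt v g # Elt v h # s) (w @ Elt v (g \<otimes>\<^bsub>ggrp X v\<^esub> h) # s)"
proof -
  have v: "v \<in> gverts X" using ok_endpoints[OF graph assms(1)] by blast
  then have "ok X d (w @ [Elt v g, Elt v h] @ s) t" using assms ok_append[OF graph] by auto
  from weq_grel[OF grel.mult[OF v assms(3,4)] this] show ?thesis by simp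
qed

lemma weq_gword_rev:
  assumes "x \<in> gel X" "ok X d w (gsrc X x)" "ok X (gsrc X x) s t"
  shows "weq X d (w @ gword X x @ gword X (grev X x) @ s) (w @ s)"
proof (cases "gsrc X x = x")
  case True
  then have "grev X x = x" using assms(1) rev_vert[OF graph] unfolding gverts_def by blast
  then show ?thesis using True unfolding gword_def by (simp add: weq_refl)
next
  case False
  then have x: "x \<in> gedges X" using assms(1) unfolding gedges_def by blast
  have rx: "grev X x \<in> gedges X" using rev_in_edges[OF graph x] .
  have "ok X (gsrc X x) [Edg x, Edg (grev X x)] (gsrc X x)"
    using x rx tgt_rev[OF graph assms(1)] ok_endpoints[OF graph assms(3)] by (simp add: gtgt_def)
  then have "ok X d (w @ [Edg x, Edg (grev X x)] @ s) t" using assms ok_append[OF graph] by blast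
  moreover have "gword X x = [Edg x]" "gword X (grev X x) = [Edg (grev X x)]"
    using x rx unfolding gword_def gedges_def by auto
  ultimately show ?thesis using weq_grel[OF grel.inv[OF x]] by simp
qed

lemma weq_gword_slide:
  assumes "x \<in> gel X" "k \<in> carrier (ggrp X x)" "ok X d w (gsrc X x)" "ok X (gtgt X x) s t"
  shows "weq X d (w @ Elt (gsrc X x) (ghm X x k) # gword X x @ s)
                 (w @ gword X x @ Elt (gtgt X x) (ghm X (grev X x) (gbr X x k)) # s)"
proof (cases "gsrc X x = x")
  case True
  then have xv: "x \<in> gverts X" using assms unfolding gverts_def by blast
  then show ?thesis
    using True rev_vert[OF graph xv] tgt_vert[OF graph xv] gog_vert_maps[OF gog xv assms(2)]
    unfolding gword_def by (simp add: weq_refl)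
next
  case False
  then have x: "x \<in> gedges X" using assms unfolding gedges_def by blast
  have "ghm X x k \<in> carrier (ggrp X (gsrc X x))" using gog_hm_carrier[OF gog assms(1,2)] .
  then have "ok X d (w @ [Elt (gsrc X x) (ghm X x k), Edg x] @ s) t"
    using x assms src_in_verts[OF graph] ok_endpoints[OF graph] ok_append[OF graph] by auto
  from weq_grel[OF grel.edge[OF x assms(2)] this] show ?thesis using False unfolding gword_def by simp
qed

end

fun word_inv :: "('x,'g) gog \<Rightarrow> ('x,'g) letter list \<Rightarrow> ('x,'g) letter list" where
  "word_inv X [] = []"
| "word_inv X (Edg x # w) = word_inv X w @ [Edg (grev X x)]"
| "word_inv X (Elt v g # w) = word_inv X w @ [Elt v (inv\<^bsub>ggrp X v\<^esub> g)]"

lemma word_inv_append: "word_inv X (a @ b) = word_inv X b @ word_inv X a"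
  by (induction X a rule: word_inv.induct) simp_all

context
  fixes X :: "('x,'g) gog"
  assumes gog: "is_gog X"
begin

lemma word_inv_ok: "ok X v w u \<Longrightarrow> ok X u (word_inv X w) v"
proof (induction w arbitrary: v)
  case (Cons l w)
  show ?case
  proof (cases l)
    case (Edg x)
    with Cons.prems have x: "x \<in> gedges X" "gsrc X x = v" "ok X (gtgt X x) w u" by auto
    have graph: "is_graph X" using gog by (rule gog_graph)
    have "ok X (gtgt X x) [Edg (grev X x)] v"
      using x rev_in_edges[OF graph] tgt_rev[OF graph edges_in_el[OF x(1)]]
        src_in_verts[OF graph edges_in_el[OF x(1)]]
      by (simp add: gtgt_def)
    then show ?thesis using Cons.IH[OF x(3)] Edg ok_append[OF gog_graph[OF gog]] by auto
  next
    case (Elt y h)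
    with Cons.prems have x: "v \<in> gverts X" "y = v" "h \<in> carrier (ggrp X v)" "ok X v w u" by auto
    then have "ok X v [Elt v (inv\<^bsub>ggrp X v\<^esub> h)] v"
      using gog_group[OF gog verts_in_el] by (simp add: group.inv_closed)
    then show ?thesis using Cons.IH[OF x(4)] Elt x(2) ok_append[OF gog_graph[OF gog]] by auto
  qed
qed simp

lemma word_inv_inv: "ok X v w u \<Longrightarrow> word_inv X (word_inv X w) = w"
proof (induction w arbitrary: v)
  case (Cons l w)
  then show ?case
    using gog_group[OF gog verts_in_el] rev_rev[OF gog_graph[OF gog] edges_in_el]
    by (cases l) (auto simp: word_inv_append group.inv_inv)
qed simp

lemma weq_inv_right:
  "ok X v w u \<Longrightarrow> ok X d c v \<Longrightarrow> ok X v s t \<Longrightarrow> weq X d (c @ w @ word_inv X w @ s) (c @ s)"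
proof (induction w arbitrary: v c s)
  case (Cons l w)
  have graph: "is_graph X" using gog by (rule gog_graph)
  show ?case
  proof (cases l)
    case (Edg x)
    with Cons.prems have x: "x \<in> gedges X" "gsrc X x = v" "ok X (gtgt X x) w u" by auto
    have "ok X d (c @ [Edg x]) (gtgt X x)" "ok X (gtgt X x) (Edg (grev X x) # s) t"
      using Cons.prems x rev_in_edges[OF graph] tgt_rev[OF graph edges_in_el] ok_append[OF graph]
        ok_endpoints[OF graph]
      by (auto simp: gtgt_def)
    from Cons.IH[OF x(3) this]
    have "weq X d (c @ (l # w) @ word_inv X (l # w) @ s) (c @ gword X x @ gword X (grev X x) @ s)"
      using Edg x rev_in_edges[OF graph] unfolding gword_def gedges_def by simp
    also have "weq X d \<dots> (c @ s)"
      using weq_gword_rev[OF gog edges_in_el[OF x(1)], of d c s t] Cons.prems(2,3) x(2) by simp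
    finally show ?thesis .
  next
    case (Elt y h)
    with Cons.prems have x: "v \<in> gverts X" "y = v" "h \<in> carrier (ggrp X v)" "ok X v w u" by auto
    have G: "group (ggrp X v)" using gog_group[OF gog verts_in_el[OF x(1)]] .
    then have hi: "inv\<^bsub>ggrp X v\<^esub> h \<in> carrier (ggrp X v)" using x(3) by (rule group.inv_closed)
    have "ok X d (c @ [Elt v h]) v" "ok X v (Elt v (inv\<^bsub>ggrp X v\<^esub> h) # s) t"
      using Cons.prems x hi ok_append[OF graph] by auto
    from Cons.IH[OF x(4) this]
    have "weq X d (c @ (l # w) @ word_inv X (l # w) @ s) (c @ Elt v h # Elt v (inv\<^bsub>ggrp X v\<^esub> h) # s)"
      using Elt x(2) by simp
    also have "weq X d \<dots> (c @ Elt v (h \<otimes>\<^bsub>ggrp X v\<^esub> inv\<^bsub>ggrp X v\<^esub> h) # s)"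
      using weq_mult[OF gog Cons.prems(2,3) x(3) hi] .
    also have "weq X d \<dots> (c @ s)"
      using weq_unit[OF gog Cons.prems(2,3)] G x(3) by (simp add: group.r_inv)
    finally show ?thesis .
  qed
qed (simp add: weq_refl)

lemma weq_inv_left:
  assumes "ok X v w u" "ok X d c u" "ok X u s t" shows "weq X d (c @ word_inv X w @ w @ s) (c @ s)"
  using weq_inv_right[OF word_inv_ok[OF assms(1)] assms(2,3)] word_inv_inv[OF assms(1)] by simp

lemma weq_cancel_right:
  assumes "ok X d a v" "ok X v q w" "weq X d (a @ q) (b @ q)"
  shows "weq X d a b"
proof -
  have graph: "is_graph X" using gog by (rule gog_graph)
  have v: "v \<in> gverts X" using ok_endpoints[OF graph assms(1)] by simp
  obtain v' where b: "ok X d b v'" "ok X v' q w"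
    using weq_ok[OF gog assms(3)] assms(1,2) ok_append[OF graph] by blast
  then have "v' = v" using ok_source_unique[OF b(2) assms(2)] by simp
  have "weq X d a (a @ q @ word_inv X q)"
    using weq_sym[OF weq_inv_right[OF assms(2,1), of "[]" v]] v by simp
  also have "weq X d \<dots> (b @ q @ word_inv X q)"
  proof -
    have "ok X d (a @ q) w" using assms(1,2) ok_append[OF graph] by blast
    then show ?thesis using weq_append[OF gog assms(3) _ word_inv_ok[OF assms(2)]] by simp
  qed
  also have "weq X d \<dots> b"
    using weq_inv_right[OF assms(2), of d b "[]" v] b \<open>v' = v\<close> v by simp
  finally show ?thesis .
qed

end

lemma biset_orbit_equiv:
  assumes G: "group G" and S: "is_biset G H S l r"
  shows "equiv S {(b, b'). b \<in> S \<and> b' \<in> S \<and> (\<exists>g\<in>carrier G. b' = l g b)}"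
    (is "equiv S ?R")
proof (rule equivI)
  have closed: "\<And>g b. g \<in> carrier G \<Longrightarrow> b \<in> S \<Longrightarrow> l g b \<in> S"
    and one: "\<And>b. b \<in> S \<Longrightarrow> l \<one>\<^bsub>G\<^esub> b = b"
    and mult: "\<And>g g' b. g \<in> carrier G \<Longrightarrow> g' \<in> carrier G \<Longrightarrow> b \<in> S \<Longrightarrow>
                 l (g \<otimes>\<^bsub>G\<^esub> g') b = l g (l g' b)"
    using S unfolding is_biset_def by blast+
  show "?R \<subseteq> S \<times> S" by blast
  show "refl_on S ?R"
  proof (rule refl_onI)
    fix b assume "b \<in> S"
    moreover have "\<one>\<^bsub>G\<^esub> \<in> carrier G" using G by (simp add: group.is_monoid monoid.one_closed)
    ultimately show "(b, b) \<in> ?R" using one by force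
  qed
  show "sym ?R"
  proof (rule symI)
    fix b c assume "(b, c) \<in> ?R"
    then obtain g where b: "b \<in> S" "c \<in> S" and g: "g \<in> carrier G" "c = l g b" by blast
    have i: "inv\<^bsub>G\<^esub> g \<in> carrier G" using G g(1) by (rule group.inv_closed)
    have "b = l (inv\<^bsub>G\<^esub> g) c"
      using b g by (simp add: G group.inv_closed group.l_inv one flip: mult)
    with b i show "(c, b) \<in> ?R" by auto
  qed
  show "trans ?R"
  proof (rule transI)
    fix b c d assume "(b, c) \<in> ?R" "(c, d) \<in> ?R"
    then obtain g h where "b \<in> S" "d \<in> S" "g \<in> carrier G" "h \<in> carrier G" "d = l h (l g b)"
      by blast
    moreover have "h \<otimes>\<^bsub>G\<^esub> g \<in> carrier G"
      using calculation G by (simp add: group.is_monoid monoid.m_closed)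
    ultimately show "(b, d) \<in> ?R" using mult by (auto intro!: bexI[of _ "h \<otimes>\<^bsub>G\<^esub> g"])
  qed
qed

lemma quotient_kernel_on_eqpoll: "A // {(a, b). a \<in> A \<and> b \<in> A \<and> f a = f b} \<approx> f ` A"
proof -
  have "bij_betw (\<lambda>y. {a \<in> A. f a = y}) (f ` A) (A // {(a, b). a \<in> A \<and> b \<in> A \<and> f a = f b})"
    unfolding bij_betw_def inj_on_def quotient_def
    by (auto simp: image_iff) (metis (mono_tags, lifting) Collect_cong)
  then show ?thesis using eqpoll_def eqpoll_sym by blast
qed

lemma beq_refl: "beq Y X B dag st t t"
  unfolding beq_def by simp

lemma beq_sym: "beq Y X B dag st t t' \<Longrightarrow> beq Y X B dag st t' t"
  unfolding beq_def by (rule sympD[OF symp_rtranclp]) (auto simp: symp_def)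

lemma beq_trans [trans]: "beq Y X B dag st t t' \<Longrightarrow> beq Y X B dag st t' t'' \<Longrightarrow> beq Y X B dag st t t''"
  unfolding beq_def by (rule rtranclp_trans)

lemma bstep_beq: "bstep Y X B dag st t t' \<Longrightarrow> beq Y X B dag st t t'"
  and bstep_beq_rev: "bstep Y X B dag st t' t \<Longrightarrow> beq Y X B dag st t t'"
  unfolding beq_def by blast+

locale fibrant_gob =
  fixes Y :: "('y,'g) gog" and X :: "('x,'h) gog" and B :: "('z,'y,'x,'b,'g,'h) gob"
    and dag :: 'y and st :: 'x
  assumes Y: "is_gog Y" and X: "is_gog X" and B: "is_gob Y X B" and fibrant: "left_fibrant Y X B"
begin

lemma graph_Y: "is_graph Y"
  and graph_X: "is_graph X"
  using Y X by (simp_all add: gog_graph)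

lemma graph_B: "is_graph (bgr B)"
  and lam_morphism: "graph_morphism (bgr B) Y (lam B)"
  and rho_morphism: "graph_morphism (bgr B) X (rho B)"
  using B unfolding is_gob_def by blast+

lemma rho_edge: "e \<in> gedges (bgr B) \<Longrightarrow> rho B e \<in> gedges X"
  using fibrant unfolding left_fibrant_def simplicial_def by blast

lemma lam_vert: "z \<in> gverts (bgr B) \<Longrightarrow> lam B z \<in> gverts Y"
  using morphism_vert[OF lam_morphism] .

context
  fixes z assumes z: "z \<in> gel (bgr B)"
begin

lemma group_lam: "group (ggrp Y (lam B z))"
  using gog_group[OF Y morphism_el[OF lam_morphism z]] .

lemma biset: "is_biset (ggrp Y (lam B z)) (ggrp X (rho B z)) (bset B z) (bl B z) (br B z)"
  using B z unfolding is_gob_def by blast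

lemma bl_closed: "g \<in> carrier (ggrp Y (lam B z)) \<Longrightarrow> b \<in> bset B z \<Longrightarrow> bl B z g b \<in> bset B z"
  and bl_one: "b \<in> bset B z \<Longrightarrow> bl B z \<one>\<^bsub>ggrp Y (lam B z)\<^esub> b = b"
  and bl_mult: "g \<in> carrier (ggrp Y (lam B z)) \<Longrightarrow> g' \<in> carrier (ggrp Y (lam B z)) \<Longrightarrow> b \<in> bset B z
    \<Longrightarrow> bl B z (g \<otimes>\<^bsub>ggrp Y (lam B z)\<^esub> g') b = bl B z g (bl B z g' b)"
  and br_closed: "h \<in> carrier (ggrp X (rho B z)) \<Longrightarrow> b \<in> bset B z \<Longrightarrow> br B z b h \<in> bset B z"
  and br_one: "b \<in> bset B z \<Longrightarrow> br B z b \<one>\<^bsub>ggrp X (rho B z)\<^esub> = b"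
  and br_mult: "h \<in> carrier (ggrp X (rho B z)) \<Longrightarrow> h' \<in> carrier (ggrp X (rho B z)) \<Longrightarrow> b \<in> bset B z
    \<Longrightarrow> br B z b (h \<otimes>\<^bsub>ggrp X (rho B z)\<^esub> h') = br B z (br B z b h) h'"
  and bl_br: "g \<in> carrier (ggrp Y (lam B z)) \<Longrightarrow> h \<in> carrier (ggrp X (rho B z)) \<Longrightarrow> b \<in> bset B z
    \<Longrightarrow> bl B z g (br B z b h) = br B z (bl B z g b) h"
  using biset unfolding is_biset_def by blast+

lemma bm_closed: "b \<in> bset B z \<Longrightarrow> bm B z b \<in> bset B (gsrc (bgr B) z)"
  and bb_closed: "b \<in> bset B z \<Longrightarrow> bb B z b \<in> bset B (grev (bgr B) z)"
  and bb_bb: "b \<in> bset B z \<Longrightarrow> bb B (grev (bgr B) z) (bb B z b) = b"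
  and bm_bl: "g \<in> carrier (ggrp Y (lam B z)) \<Longrightarrow> b \<in> bset B z \<Longrightarrow>
    bm B z (bl B z g b) = bl B (gsrc (bgr B) z) (ghm Y (lam B z) g) (bm B z b)"
  and bb_bl: "g \<in> carrier (ggrp Y (lam B z)) \<Longrightarrow> b \<in> bset B z \<Longrightarrow>
    bb B z (bl B z g b) = bl B (grev (bgr B) z) (gbr Y (lam B z) g) (bb B z b)"
  and bm_br: "h \<in> carrier (ggrp X (rho B z)) \<Longrightarrow> b \<in> bset B z \<Longrightarrow>
    bm B z (br B z b h) = br B (gsrc (bgr B) z) (bm B z b) (ghm X (rho B z) h)"
  and bb_br: "h \<in> carrier (ggrp X (rho B z)) \<Longrightarrow> b \<in> bset B z \<Longrightarrow>
    bb B z (br B z b h) = br B (grev (bgr B) z) (bb B z b) (gbr X (rho B z) h)"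
  using B z unfolding is_gob_def by blast+

end

subsection \<open>Decomposition along the edges of X\<close>

text \<open>By left fibrancy, every b in B_z (z a vertex) and every edge f of X leaving rho z
  determine an edge e over f and a decomposition b = g c^-, with e unique and (g, c)
  unique up to the action of G_{lam e}.\<close>

definition edge_decomp :: "'z \<Rightarrow> 'x \<Rightarrow> 'b \<Rightarrow> 'z \<Rightarrow> 'g \<Rightarrow> 'b \<Rightarrow> bool" where
  "edge_decomp z f b e g c \<longleftrightarrow> e \<in> gedges (bgr B) \<and> rho B e = f \<and> gsrc (bgr B) e = z
     \<and> g \<in> carrier (ggrp Y (lam B z)) \<and> c \<in> bset B e \<and> b = bl B z g (bm B e c)"

definition some_decomp :: "'z \<Rightarrow> 'x \<Rightarrow> 'b \<Rightarrow> 'z \<times> 'g \<times> 'b" where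
  "some_decomp z f b = (SOME (e, g, c). edge_decomp z f b e g c)"

lemma edge_decomp_exists:
  assumes "z \<in> gverts (bgr B)" "f \<in> gedges X" "gsrc X f = rho B z" "b \<in> bset B z"
  shows "\<exists>e g c. edge_decomp z f b e g c"
proof -
  have "\<forall>v\<in>gverts (bgr B). \<forall>f\<in>gedges X. gsrc X f = rho B v \<longrightarrow> (\<forall>c\<in>bset B v.
      \<exists>e\<in>{e\<in>gedges (bgr B). rho B e = f \<and> gsrc (bgr B) e = v}.
      \<exists>g\<in>carrier (ggrp Y (lam B v)). \<exists>b\<in>bset B e. c = bl B v g (bm B e b))"
    using fibrant unfolding left_fibrant_def Let_def by blast
  from this[rule_format, OF assms] show ?thesis unfolding edge_decomp_def by blast
qed

lemma edge_decomp_unique: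
  assumes "z \<in> gverts (bgr B)" "edge_decomp z f b e g c" "edge_decomp z f b e' g' c'"
  shows "e = e' \<and> (\<exists>k\<in>carrier (ggrp Y (lam B e)).
                      g = g' \<otimes>\<^bsub>ggrp Y (lam B z)\<^esub> ghm Y (lam B e) k \<and> c' = bl B e k c)"
proof -
  let ?Es = "{e \<in> gedges (bgr B). rho B e = f \<and> gsrc (bgr B) e = z}"
  have e: "e \<in> ?Es" "g \<in> carrier (ggrp Y (lam B z))" "c \<in> bset B e"
    and e': "e' \<in> ?Es" "g' \<in> carrier (ggrp Y (lam B z))" "c' \<in> bset B e'"
    and eq: "bl B z g (bm B e c) = bl B z g' (bm B e' c')"
    using assms(2,3) unfolding edge_decomp_def by auto
  then have f: "f \<in> gedges X" "gsrc X f = rho B z"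
    using rho_edge morphism_src[OF rho_morphism edges_in_el] by auto
  have "\<forall>v\<in>gverts (bgr B). \<forall>f\<in>gedges X. gsrc X f = rho B v \<longrightarrow>
      (\<forall>e\<in>{e\<in>gedges (bgr B). rho B e = f \<and> gsrc (bgr B) e = v}.
       \<forall>e'\<in>{e\<in>gedges (bgr B). rho B e = f \<and> gsrc (bgr B) e = v}.
       \<forall>g\<in>carrier (ggrp Y (lam B v)). \<forall>g'\<in>carrier (ggrp Y (lam B v)).
       \<forall>c\<in>bset B e. \<forall>c'\<in>bset B e'.
          bl B v g (bm B e c) = bl B v g' (bm B e' c') \<longrightarrow>
          e = e' \<and> (\<exists>k\<in>carrier (ggrp Y (lam B e)).
                      g = g' \<otimes>\<^bsub>ggrp Y (lam B v)\<^esub> ghm Y (lam B e) k \<and> c' = bl B e k c))"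
    using fibrant unfolding left_fibrant_def Let_def by blast
  from this[rule_format, OF assms(1) f e(1) e'(1) e(2) e'(2) e(3) e'(3) eq] show ?thesis .
qed

lemma some_decomp:
  assumes "z \<in> gverts (bgr B)" "f \<in> gedges X" "gsrc X f = rho B z" "b \<in> bset B z"
    and "some_decomp z f b = (e, g, c)"
  shows "edge_decomp z f b e g c"
proof -
  obtain e0 g0 c0 where "edge_decomp z f b e0 g0 c0" using edge_decomp_exists[OF assms(1-4)] by blast
  then have "(\<lambda>(e, g, c). edge_decomp z f b e g c) (e0, g0, c0)" by simp
  then have "(\<lambda>(e, g, c). edge_decomp z f b e g c) (some_decomp z f b)"
    unfolding some_decomp_def by (rule someI)
  with assms(5) show ?thesis by simp
qed

subsection \<open>The tensor products pi1(Y, dag, lam z) (x) B_z\<close>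

definition tensor_ok :: "('y,'g) letter list \<times> 'z \<times> 'b \<Rightarrow> bool" where
  "tensor_ok t \<longleftrightarrow> (case t of (q, z, b) \<Rightarrow>
     z \<in> gverts (bgr B) \<and> ok Y dag q (lam B z) \<and> b \<in> bset B z)"

text \<open>Equality of q (x) b and q' (x) b', generated by q (x) g b' = q g (x) b'.\<close>
definition tensor_eq :: "('y,'g) letter list \<times> 'z \<times> 'b \<Rightarrow> ('y,'g) letter list \<times> 'z \<times> 'b \<Rightarrow> bool" where
  "tensor_eq t t' \<longleftrightarrow> tensor_ok t \<and> tensor_ok t' \<and> (case t of (q, z, b) \<Rightarrow> case t' of (q', z', b') \<Rightarrow>
     z' = z \<and> (\<exists>g\<in>carrier (ggrp Y (lam B z)). b = bl B z g b' \<and> weq Y dag (q @ [Elt (lam B z) g]) q'))"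

lemma tensor_ok_iff [simp]:
  "tensor_ok (q, z, b) \<longleftrightarrow> z \<in> gverts (bgr B) \<and> ok Y dag q (lam B z) \<and> b \<in> bset B z"
  unfolding tensor_ok_def by simp

lemma tensor_eq_iff:
  "tensor_eq (q, z, b) (q', z', b') \<longleftrightarrow> tensor_ok (q, z, b) \<and> tensor_ok (q', z', b') \<and> z' = z \<and>
     (\<exists>g\<in>carrier (ggrp Y (lam B z)). b = bl B z g b' \<and> weq Y dag (q @ [Elt (lam B z) g]) q')"
  unfolding tensor_eq_def by simp

lemma tensor_eq_bl:
  assumes "tensor_ok (q, z, b)" "g \<in> carrier (ggrp Y (lam B z))"
  shows "tensor_eq (q, z, bl B z g b) (q @ [Elt (lam B z) g], z, b)"
  using assms bl_closed[OF verts_in_el] lam_vert ok_append[OF graph_Y]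
  by (auto simp: tensor_eq_iff weq_refl)

lemma tensor_eq_weq:
  assumes "tensor_ok (q, z, b)" "weq Y dag q q'"
  shows "tensor_eq (q, z, b) (q', z, b)"
proof -
  have G: "group (ggrp Y (lam B z))" using assms(1) group_lam[OF verts_in_el] by simp
  have "weq Y dag (q @ [Elt (lam B z) \<one>\<^bsub>ggrp Y (lam B z)\<^esub>]) q"
    using weq_unit[OF Y, of dag q "lam B z" "[]"] assms(1) lam_vert by simp
  also note assms(2)
  finally have "weq Y dag (q @ [Elt (lam B z) \<one>\<^bsub>ggrp Y (lam B z)\<^esub>]) q'" .
  moreover have "\<one>\<^bsub>ggrp Y (lam B z)\<^esub> \<in> carrier (ggrp Y (lam B z))" "b = bl B z \<one>\<^bsub>ggrp Y (lam B z)\<^esub> b"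
    using G assms(1) bl_one[OF verts_in_el] by (simp_all add: group.is_monoid monoid.one_closed)
  ultimately show ?thesis using assms weq_ok[OF Y assms(2)] unfolding tensor_eq_iff by auto
qed

lemma tensor_eq_refl: "tensor_ok t \<Longrightarrow> tensor_eq t t"
  using tensor_eq_weq[OF _ weq_refl] by (cases t) auto

lemma tensor_eq_sym: assumes "tensor_eq t t'" shows "tensor_eq t' t"
proof -
  obtain q z b q' b' g where t: "t = (q, z, b)" "t' = (q', z, b')"
    and ok: "tensor_ok (q, z, b)" "tensor_ok (q', z, b')"
    and g: "g \<in> carrier (ggrp Y (lam B z))" "b = bl B z g b'" "weq Y dag (q @ [Elt (lam B z) g]) q'"
    using assms by (cases t, cases t') (auto simp: tensor_eq_iff)
  have zel: "z \<in> gel (bgr B)" and lzv: "lam B z \<in> gverts Y" using ok lam_vert verts_in_el by auto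
  have G: "group (ggrp Y (lam B z))" using group_lam[OF zel] .
  let ?i = "inv\<^bsub>ggrp Y (lam B z)\<^esub> g"
  have i: "?i \<in> carrier (ggrp Y (lam B z))" using G g(1) by (simp add: group.inv_closed)
  have "b' = bl B z ?i b"
    using g ok G bl_mult[OF zel i g(1)] bl_one[OF zel] by (simp add: group.l_inv)
  have "weq Y dag (q' @ [Elt (lam B z) ?i]) ((q @ [Elt (lam B z) g]) @ [Elt (lam B z) ?i])"
    using weq_append[OF Y weq_sym[OF g(3)] _, of "lam B z" "[Elt (lam B z) ?i]" "lam B z"]
      ok lzv i by simp
  also have "weq Y dag \<dots> (q @ [Elt (lam B z) (g \<otimes>\<^bsub>ggrp Y (lam B z)\<^esub> ?i)])"
    using weq_mult[OF Y, of dag q "lam B z" "[]" _ g ?i] ok g(1) i lzv by simp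
  also have "weq Y dag \<dots> q"
    using weq_unit[OF Y, of dag q "lam B z" "[]"] ok lzv G g(1) by (simp add: group.r_inv)
  finally show ?thesis using t ok i \<open>b' = bl B z ?i b\<close> by (auto simp: tensor_eq_iff)
qed

lemma tensor_eq_trans [trans]: assumes "tensor_eq t t'" "tensor_eq t' t''" shows "tensor_eq t t''"
proof -
  obtain q z b q' b' q'' b'' g h where t: "t = (q, z, b)" "t'' = (q'', z, b'')"
    and ok: "tensor_ok (q, z, b)" "tensor_ok (q'', z, b'')"
    and g: "g \<in> carrier (ggrp Y (lam B z))" "b = bl B z g b'" "weq Y dag (q @ [Elt (lam B z) g]) q'"
    and h: "h \<in> carrier (ggrp Y (lam B z))" "b' = bl B z h b''" "weq Y dag (q' @ [Elt (lam B z) h]) q''"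
    using assms by (cases t, cases t', cases t'') (auto simp: tensor_eq_iff)
  have zel: "z \<in> gel (bgr B)" and lzv: "lam B z \<in> gverts Y" using ok lam_vert verts_in_el by auto
  have G: "group (ggrp Y (lam B z))" using group_lam[OF zel] .
  have gh: "g \<otimes>\<^bsub>ggrp Y (lam B z)\<^esub> h \<in> carrier (ggrp Y (lam B z))"
    using G g(1) h(1) by (simp add: group.is_monoid monoid.m_closed)
  have "weq Y dag (q @ [Elt (lam B z) (g \<otimes>\<^bsub>ggrp Y (lam B z)\<^esub> h)]) (q @ [Elt (lam B z) g, Elt (lam B z) h])"
    using weq_sym[OF weq_mult[OF Y, of dag q "lam B z" "[]" _ g h]] ok g(1) h(1) lzv by simp
  also have "weq Y dag \<dots> (q' @ [Elt (lam B z) h])"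
    using weq_append[OF Y g(3), of "lam B z" "[Elt (lam B z) h]" "lam B z"] ok lzv g(1) h(1)
      ok_append[OF graph_Y] by simp
  also note h(3)
  finally have "weq Y dag (q @ [Elt (lam B z) (g \<otimes>\<^bsub>ggrp Y (lam B z)\<^esub> h)]) q''" .
  moreover have "b = bl B z (g \<otimes>\<^bsub>ggrp Y (lam B z)\<^esub> h) b''"
    using ok g h bl_mult[OF zel g(1) h(1)] by simp
  ultimately show ?thesis using ok gh unfolding t tensor_eq_iff by blast
qed

text \<open>The edge relation of the fundamental biset: q (x) c^- = q lam(e) (x) c^+.\<close>
definition cross_edge :: "('y,'g) letter list \<Rightarrow> 'z \<Rightarrow> 'b \<Rightarrow> ('y,'g) letter list \<times> 'z \<times> 'b" where
  "cross_edge q e c = (q @ gword Y (lam B e), gtgt (bgr B) e, bm B (grev (bgr B) e) (bb B e c))"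

lemma cross_edge_ok:
  assumes "e \<in> gel (bgr B)" "c \<in> bset B e" "ok Y dag q (lam B (gsrc (bgr B) e))"
  shows "tensor_ok (cross_edge q e c)"
proof -
  have "ok Y (lam B (gsrc (bgr B) e)) (gword Y (lam B e)) (lam B (gtgt (bgr B) e))"
    using ok_gword[OF Y morphism_el[OF lam_morphism assms(1)]]
      morphism_src[OF lam_morphism assms(1)] morphism_tgt[OF lam_morphism graph_B assms(1)] by simp
  moreover have "bm B (grev (bgr B) e) (bb B e c) \<in> bset B (gtgt (bgr B) e)"
    using bm_closed[OF rev_in_el[OF graph_B assms(1)] bb_closed[OF assms(1,2)]] unfolding gtgt_def .
  ultimately show ?thesis
    using assms(3) tgt_in_verts[OF graph_B assms(1)] ok_append[OF graph_Y]
    unfolding cross_edge_def by auto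
qed

lemma cross_edge_weq:
  assumes "e \<in> gel (bgr B)" "c \<in> bset B e" "ok Y dag q (lam B (gsrc (bgr B) e))" "weq Y dag q q'"
  shows "tensor_eq (cross_edge q e c) (cross_edge q' e c)"
proof -
  have "ok Y (lam B (gsrc (bgr B) e)) (gword Y (lam B e)) (lam B (gtgt (bgr B) e))"
    using ok_gword[OF Y morphism_el[OF lam_morphism assms(1)]]
      morphism_src[OF lam_morphism assms(1)] morphism_tgt[OF lam_morphism graph_B assms(1)] by simp
  then have "weq Y dag (q @ gword Y (lam B e)) (q' @ gword Y (lam B e))"
    by (rule weq_append[OF Y assms(4,3)])
  with cross_edge_ok[OF assms(1-3)] show ?thesis
    unfolding cross_edge_def by (simp add: tensor_eq_weq)
qed

lemma cross_edge_bl: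
  assumes "e \<in> gel (bgr B)" "c \<in> bset B e" "ok Y dag q (lam B (gsrc (bgr B) e))"
    and "k \<in> carrier (ggrp Y (lam B e))"
  shows "tensor_eq (cross_edge q e (bl B e k c))
                   (cross_edge (q @ [Elt (lam B (gsrc (bgr B) e)) (ghm Y (lam B e) k)]) e c)"
proof -
  let ?t = "gtgt (bgr B) e" and ?r = "grev (bgr B) e"
  let ?\<kappa> = "ghm Y (grev Y (lam B e)) (gbr Y (lam B e) k)"
  have le: "lam B e \<in> gel Y" and lr: "lam B ?r = grev Y (lam B e)"
    using morphism_el[OF lam_morphism assms(1)] morphism_rev[OF lam_morphism assms(1)] .
  have lt: "gtgt Y (lam B e) = lam B ?t" and ls: "gsrc Y (lam B e) = lam B (gsrc (bgr B) e)"
    using morphism_tgt[OF lam_morphism graph_B assms(1)] morphism_src[OF lam_morphism assms(1)] by simp_all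
  have kb: "gbr Y (lam B e) k \<in> carrier (ggrp Y (lam B ?r))"
    using gog_br_carrier[OF Y le assms(4)] lr by simp
  have \<kappa>: "?\<kappa> \<in> carrier (ggrp Y (lam B ?t))"
    using gog_hm_carrier[OF Y rev_in_el[OF graph_Y le]] kb lr lt by (simp add: gtgt_def)
  have c_plus: "bm B ?r (bb B e (bl B e k c)) = bl B ?t ?\<kappa> (bm B ?r (bb B e c))"
    using bb_bl[OF assms(1,4,2)] bm_bl[OF rev_in_el[OF graph_B assms(1)] kb bb_closed[OF assms(1,2)]] lr
    unfolding gtgt_def by simp
  have "weq Y dag ((q @ gword Y (lam B e)) @ [Elt (lam B ?t) ?\<kappa>])
                  (q @ Elt (lam B (gsrc (bgr B) e)) (ghm Y (lam B e) k) # gword Y (lam B e))"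
    using weq_sym[OF weq_gword_slide[OF Y le assms(4), of dag q "[]"]] assms(3) ls lt
      lam_vert[OF tgt_in_verts[OF graph_B assms(1)]] by simp
  moreover have "tensor_ok (cross_edge q e (bl B e k c))"
    using cross_edge_ok[OF assms(1) bl_closed[OF assms(1,4,2)] assms(3)] .
  moreover have "tensor_ok (cross_edge (q @ [Elt (lam B (gsrc (bgr B) e)) (ghm Y (lam B e) k)]) e c)"
    using cross_edge_ok[OF assms(1,2)] assms(3) gog_hm_carrier[OF Y le assms(4)] ls
      lam_vert[OF src_in_verts[OF graph_B assms(1)]] ok_append[OF graph_Y] by auto
  ultimately show ?thesis using \<kappa> c_plus unfolding cross_edge_def tensor_eq_iff by auto
qed

lemma decomp_cross_edge:
  assumes "z \<in> gverts (bgr B)" "ok Y dag q (lam B z)"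
    and "edge_decomp z f b e g c" "edge_decomp z f b e' g' c'"
  shows "e = e' \<and> tensor_eq (cross_edge (q @ [Elt (lam B z) g']) e' c') (cross_edge (q @ [Elt (lam B z) g]) e c)"
proof -
  obtain k where e': "e' = e" and k: "k \<in> carrier (ggrp Y (lam B e))"
    "g = g' \<otimes>\<^bsub>ggrp Y (lam B z)\<^esub> ghm Y (lam B e) k" "c' = bl B e k c"
    using edge_decomp_unique[OF assms(1,3,4)] by metis
  have e: "e \<in> gel (bgr B)" "gsrc (bgr B) e = z" "g' \<in> carrier (ggrp Y (lam B z))" "c \<in> bset B e"
    using assms(3,4) e' edges_in_el unfolding edge_decomp_def by auto
  have lzv: "lam B z \<in> gverts Y" using lam_vert[OF assms(1)] .
  have kz: "ghm Y (lam B e) k \<in> carrier (ggrp Y (lam B z))"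
    using gog_hm_carrier[OF Y morphism_el[OF lam_morphism e(1)] k(1)] morphism_src[OF lam_morphism e(1)] e(2)
    by simp
  have q': "ok Y dag (q @ [Elt (lam B z) g']) (lam B z)" using assms(2) e(3) lzv ok_append[OF graph_Y] by auto
  have "tensor_eq (cross_edge (q @ [Elt (lam B z) g']) e c')
          (cross_edge ((q @ [Elt (lam B z) g']) @ [Elt (lam B z) (ghm Y (lam B e) k)]) e c)"
    using cross_edge_bl[OF e(1,4) _ k(1), of "q @ [Elt (lam B z) g']"] q' e(2) k(3) by simp
  also have "tensor_eq \<dots> (cross_edge (q @ [Elt (lam B z) g]) e c)"
  proof (rule cross_edge_weq[OF e(1,4)])
    show "ok Y dag ((q @ [Elt (lam B z) g']) @ [Elt (lam B z) (ghm Y (lam B e) k)]) (lam B (gsrc (bgr B) e))"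
      using q' kz lzv e(2) ok_append[OF graph_Y] by auto
    show "weq Y dag ((q @ [Elt (lam B z) g']) @ [Elt (lam B z) (ghm Y (lam B e) k)]) (q @ [Elt (lam B z) g])"
      using weq_mult[OF Y assms(2), of "[]" _ g' "ghm Y (lam B e) k"] e(3) kz lzv k(2) by simp
  qed
  finally show ?thesis using e' by simp
qed

lemma cross_edge_tensor_eq:
  assumes "tensor_eq (q1, z, b1) (q2, z, b2)"
    and "edge_decomp z f b1 e1 g1 c1" "edge_decomp z f b2 e2 g2 c2"
  shows "e1 = e2 \<and> tensor_eq (cross_edge (q1 @ [Elt (lam B z) g1]) e1 c1)
                                (cross_edge (q2 @ [Elt (lam B z) g2]) e2 c2)"
proof -
  obtain g where ok: "tensor_ok (q1, z, b1)" "tensor_ok (q2, z, b2)"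
    and g: "g \<in> carrier (ggrp Y (lam B z))" "b1 = bl B z g b2" "weq Y dag (q1 @ [Elt (lam B z) g]) q2"
    using assms(1) unfolding tensor_eq_iff by blast
  have zel: "z \<in> gel (bgr B)" and lzv: "lam B z \<in> gverts Y" using ok verts_in_el lam_vert by auto
  have e2: "e2 \<in> gel (bgr B)" "gsrc (bgr B) e2 = z" "g2 \<in> carrier (ggrp Y (lam B z))" "c2 \<in> bset B e2"
    "b2 = bl B z g2 (bm B e2 c2)"
    using assms(3) edges_in_el unfolding edge_decomp_def by auto
  have gg2: "g \<otimes>\<^bsub>ggrp Y (lam B z)\<^esub> g2 \<in> carrier (ggrp Y (lam B z))"
    using group_lam[OF zel] g(1) e2(3) by (simp add: group.is_monoid monoid.m_closed)
  have "edge_decomp z f b1 e2 (g \<otimes>\<^bsub>ggrp Y (lam B z)\<^esub> g2) c2"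
    using assms(3) gg2 g(2) e2 bl_mult[OF zel g(1) e2(3)] bm_closed[OF e2(1,4)]
    unfolding edge_decomp_def by simp
  from decomp_cross_edge[OF _ _ this assms(2)] ok
  have e12: "e1 = e2" and first: "tensor_eq (cross_edge (q1 @ [Elt (lam B z) g1]) e1 c1)
                    (cross_edge (q1 @ [Elt (lam B z) (g \<otimes>\<^bsub>ggrp Y (lam B z)\<^esub> g2)]) e2 c2)"
    by auto
  note first
  also have "tensor_eq \<dots> (cross_edge (q2 @ [Elt (lam B z) g2]) e2 c2)"
  proof (rule cross_edge_weq[OF e2(1,4)])
    show "ok Y dag (q1 @ [Elt (lam B z) (g \<otimes>\<^bsub>ggrp Y (lam B z)\<^esub> g2)]) (lam B (gsrc (bgr B) e2))"
      using ok gg2 lzv e2(2) ok_append[OF graph_Y] by auto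
    have "weq Y dag (q1 @ [Elt (lam B z) (g \<otimes>\<^bsub>ggrp Y (lam B z)\<^esub> g2)])
                    (q1 @ [Elt (lam B z) g, Elt (lam B z) g2])"
      using weq_sym[OF weq_mult[OF Y, of dag q1 "lam B z" "[]" _ g g2]] ok g(1) e2(3) lzv by simp
    also have "weq Y dag \<dots> (q2 @ [Elt (lam B z) g2])"
      using weq_append[OF Y g(3), of "lam B z" "[Elt (lam B z) g2]" "lam B z"] ok g(1) e2(3) lzv
        ok_append[OF graph_Y] by simp
    finally show "weq Y dag (q1 @ [Elt (lam B z) (g \<otimes>\<^bsub>ggrp Y (lam B z)\<^esub> g2)]) (q2 @ [Elt (lam B z) g2])" .
  qed
  finally show ?thesis using e12 by simp
qed

lemma edge_decomp_rev:
  assumes "e \<in> gedges (bgr B)" "c \<in> bset B e"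
  shows "edge_decomp (gtgt (bgr B) e) (grev X (rho B e)) (bm B (grev (bgr B) e) (bb B e c))
           (grev (bgr B) e) \<one>\<^bsub>ggrp Y (lam B (gtgt (bgr B) e))\<^esub> (bb B e c)"
proof -
  have eel: "e \<in> gel (bgr B)" using edges_in_el[OF assms(1)] .
  have t: "gtgt (bgr B) e \<in> gel (bgr B)" using verts_in_el[OF tgt_in_verts[OF graph_B eel]] .
  have "bm B (grev (bgr B) e) (bb B e c) \<in> bset B (gtgt (bgr B) e)"
    using bm_closed[OF rev_in_el[OF graph_B eel] bb_closed[OF eel assms(2)]] unfolding gtgt_def .
  then show ?thesis
    using rev_in_edges[OF graph_B assms(1)] morphism_rev[OF rho_morphism eel] bb_closed[OF eel assms(2)]
      bl_one[OF t] group_lam[OF t]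
    unfolding edge_decomp_def by (simp add: gtgt_def group.is_monoid monoid.one_closed)
qed

lemma cross_edge_back:
  assumes "e \<in> gedges (bgr B)" "c \<in> bset B e" "ok Y dag q (lam B (gsrc (bgr B) e))"
  shows "tensor_eq (cross_edge (q @ gword Y (lam B e) @ [Elt (lam B (gtgt (bgr B) e)) \<one>\<^bsub>ggrp Y (lam B (gtgt (bgr B) e))\<^esub>])
                     (grev (bgr B) e) (bb B e c))
                   (q, gsrc (bgr B) e, bm B e c)"
proof -
  have eel: "e \<in> gel (bgr B)" using edges_in_el[OF assms(1)] .
  let ?r = "grev (bgr B) e" and ?l = "lam B e"
  have le: "?l \<in> gel Y" using morphism_el[OF lam_morphism eel] .
  have lr: "lam B ?r = grev Y ?l" and ls: "gsrc Y ?l = lam B (gsrc (bgr B) e)"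
    and lt: "gtgt Y ?l = lam B (gtgt (bgr B) e)"
    using morphism_rev[OF lam_morphism eel] morphism_src[OF lam_morphism eel]
      morphism_tgt[OF lam_morphism graph_B eel] by simp_all
  have ok_l: "ok Y (lam B (gsrc (bgr B) e)) (gword Y ?l) (lam B (gtgt (bgr B) e))"
    using ok_gword[OF Y le] ls lt by simp
  have ok_r: "ok Y (lam B (gtgt (bgr B) e)) (gword Y (lam B ?r)) (lam B (gsrc (bgr B) e))"
    using ok_gword[OF Y rev_in_el[OF graph_Y le]] lr ls lt tgt_rev[OF graph_Y le] by (simp add: gtgt_def)
  have "weq Y dag (q @ gword Y ?l @ Elt (lam B (gtgt (bgr B) e)) \<one>\<^bsub>ggrp Y (lam B (gtgt (bgr B) e))\<^esub> # gword Y (lam B ?r))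
                  (q @ gword Y ?l @ gword Y (lam B ?r))"
    using weq_unit[OF Y _ ok_r, of dag "q @ gword Y ?l"] assms(3) ok_l ok_append[OF graph_Y] by auto
  also have "weq Y dag \<dots> q"
    using weq_gword_rev[OF Y le, of dag q "[]"] assms(3) ls lr
      lam_vert[OF src_in_verts[OF graph_B eel]] by simp
  finally have "tensor_eq (q, gsrc (bgr B) e, bm B e c)
     (q @ gword Y ?l @ Elt (lam B (gtgt (bgr B) e)) \<one>\<^bsub>ggrp Y (lam B (gtgt (bgr B) e))\<^esub> # gword Y (lam B ?r),
      gsrc (bgr B) e, bm B e c)"
    using tensor_eq_weq[OF _ weq_sym] assms src_in_verts[OF graph_B eel] bm_closed[OF eel] by simp
  then show ?thesis
    using tensor_eq_sym tgt_rev[OF graph_B eel] rev_rev[OF graph_B eel] bb_bb[OF eel assms(2)]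
    unfolding cross_edge_def by simp
qed

subsection \<open>Pushing the right factor to the left\<close>

fun push_word :: "('y,'g) letter list \<times> 'z \<times> 'b \<Rightarrow> ('x,'h) letter list \<Rightarrow> ('y,'g) letter list \<times> 'z \<times> 'b" where
  "push_word t [] = t"
| "push_word (q, z, b) (Elt y h # p) = push_word (q, z, br B z b h) p"
| "push_word (q, z, b) (Edg f # p) =
     (case some_decomp z f b of (e, g, c) \<Rightarrow> push_word (cross_edge (q @ [Elt (lam B z) g]) e c) p)"

lemma push_word_prepend:
  "push_word (a @ q, z, b) p = (case push_word (q, z, b) p of (q', z', b') \<Rightarrow> (a @ q', z', b'))"
proof (induction p arbitrary: q z b)
  case (Cons l p)
  then show ?case by (cases l) (auto simp: cross_edge_def split: prod.split)
qed simp

lemma push_word_append: "push_word t (p @ p') = push_word (push_word t p) p'"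
  by (induction t p rule: push_word.induct) (auto split: prod.split)

lemma push_word_Edg:
  assumes "tensor_ok (q, z, b)" "ok X (rho B z) (Edg f # p) u"
  obtains e g c where "edge_decomp z f b e g c"
    and "push_word (q, z, b) (Edg f # p) = push_word (cross_edge (q @ [Elt (lam B z) g]) e c) p"
proof -
  obtain e g c where d: "some_decomp z f b = (e, g, c)" by (cases "some_decomp z f b") auto
  have "edge_decomp z f b e g c" using some_decomp[OF _ _ _ _ d] assms by auto
  with d show ?thesis using that by simp
qed

lemma cross_edge_decomp_ok:
  assumes "tensor_ok (q, z, b)" "edge_decomp z f b e g c"
  shows "tensor_ok (cross_edge (q @ [Elt (lam B z) g]) e c) \<and> rho B (gtgt (bgr B) e) = gtgt X f"
proof -
  have e: "e \<in> gel (bgr B)" "rho B e = f" "gsrc (bgr B) e = z" "g \<in> carrier (ggrp Y (lam B z))" "c \<in> bset B e"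
    using assms(2) edges_in_el unfolding edge_decomp_def by auto
  then show ?thesis
    using cross_edge_ok[OF e(1,5)] assms(1) lam_vert ok_append[OF graph_Y]
      morphism_tgt[OF rho_morphism graph_B e(1)]
    by auto
qed

lemma push_word_ok:
  assumes "tensor_ok (q, z, b)" "ok X (rho B z) p u" "push_word (q, z, b) p = (q', z', b')"
  shows "tensor_ok (q', z', b') \<and> rho B z' = u"
  using assms
proof (induction p arbitrary: q z b)
  case (Cons l p)
  show ?case
  proof (cases l)
    case (Edg f)
    then obtain e g c where d: "edge_decomp z f b e g c"
      and push: "push_word (q, z, b) (l # p) = push_word (cross_edge (q @ [Elt (lam B z) g]) e c) p"
      using push_word_Edg Cons.prems by metis
    obtain Q t c' where cross: "cross_edge (q @ [Elt (lam B z) g]) e c = (Q, t, c')" by (metis prod_cases3)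
    have "tensor_ok (Q, t, c')" "rho B t = gtgt X f"
      using cross_edge_decomp_ok[OF Cons.prems(1) d] cross unfolding cross_edge_def by auto
    moreover have "ok X (gtgt X f) p u" using Cons.prems(2) Edg by simp
    ultimately show ?thesis using Cons.IH Cons.prems(3) push cross by simp
  next
    case (Elt y h)
    with Cons.prems(2) have "h \<in> carrier (ggrp X (rho B z))" "ok X (rho B z) p u" by auto
    moreover have "br B z b h \<in> bset B z"
      using Cons.prems(1) br_closed[OF verts_in_el calculation(1)] by simp
    ultimately show ?thesis using Cons.IH[of q z "br B z b h"] Cons.prems(1,3) Elt by simp
  qed
qed simp

lemma push_word_tensor_eq:
  assumes "tensor_eq (q1, z, b1) (q2, z, b2)" "ok X (rho B z) p u"
  shows "tensor_eq (push_word (q1, z, b1) p) (push_word (q2, z, b2) p)"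
  using assms
proof (induction p arbitrary: q1 q2 z b1 b2)
  case (Cons l p)
  obtain g where ok: "tensor_ok (q1, z, b1)" "tensor_ok (q2, z, b2)"
    and g: "g \<in> carrier (ggrp Y (lam B z))" "b1 = bl B z g b2" "weq Y dag (q1 @ [Elt (lam B z) g]) q2"
    using Cons.prems(1) unfolding tensor_eq_iff by blast
  have zel: "z \<in> gel (bgr B)" using ok(1) by (simp add: verts_in_el)
  show ?case
  proof (cases l)
    case (Elt y h)
    with Cons.prems(2) have h: "y = rho B z" "h \<in> carrier (ggrp X (rho B z))" "ok X (rho B z) p u" by auto
    have "br B z b1 h = bl B z g (br B z b2 h)" using g(2) bl_br[OF zel g(1) h(2)] ok by simp
    moreover have "br B z b2 h \<in> bset B z" using ok br_closed[OF zel h(2)] by simp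
    ultimately have "tensor_eq (q1, z, br B z b1 h) (q2, z, br B z b2 h)"
      using ok g bl_closed[OF zel g(1)] unfolding tensor_eq_iff by auto
    then show ?thesis using Cons.IH h(3) Elt by simp
  next
    case (Edg f)
    obtain e1 g1 c1 where d1: "edge_decomp z f b1 e1 g1 c1"
      and p1: "push_word (q1, z, b1) (l # p) = push_word (cross_edge (q1 @ [Elt (lam B z) g1]) e1 c1) p"
      using push_word_Edg[OF ok(1)] Cons.prems(2) Edg by metis
    obtain e2 g2 c2 where d2: "edge_decomp z f b2 e2 g2 c2"
      and p2: "push_word (q2, z, b2) (l # p) = push_word (cross_edge (q2 @ [Elt (lam B z) g2]) e2 c2) p"
      using push_word_Edg[OF ok(2)] Cons.prems(2) Edg by metis
    have "e1 = e2" and cross: "tensor_eq (cross_edge (q1 @ [Elt (lam B z) g1]) e1 c1)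
                                         (cross_edge (q2 @ [Elt (lam B z) g2]) e2 c2)"
      using cross_edge_tensor_eq[OF Cons.prems(1) d1 d2] by auto
    moreover have "rho B (gtgt (bgr B) e1) = gtgt X f"
      using cross_edge_decomp_ok[OF ok(1) d1] by simp
    moreover have "ok X (gtgt X f) p u" using Cons.prems(2) Edg by simp
    ultimately show ?thesis using Cons.IH[of _ "gtgt (bgr B) e1"] p1 p2 unfolding cross_edge_def by simp
  qed
qed simp

lemma push_word_decomp:
  assumes "tensor_ok (q, z, b)" "ok X (rho B z) (Edg f # p) u" "edge_decomp z f b e g c"
  shows "tensor_eq (push_word (q, z, b) (Edg f # p)) (push_word (cross_edge (q @ [Elt (lam B z) g]) e c) p)"
proof -
  obtain e' g' c' where d: "edge_decomp z f b e' g' c'"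
    and push: "push_word (q, z, b) (Edg f # p) = push_word (cross_edge (q @ [Elt (lam B z) g']) e' c') p"
    using push_word_Edg[OF assms(1,2)] by metis
  have "e' = e" and "tensor_eq (cross_edge (q @ [Elt (lam B z) g']) e' c') (cross_edge (q @ [Elt (lam B z) g]) e c)"
    using cross_edge_tensor_eq[OF tensor_eq_refl[OF assms(1)] d assms(3)] by auto
  moreover have "rho B (gtgt (bgr B) e) = gtgt X f" using cross_edge_decomp_ok[OF assms(1,3)] by simp
  moreover have "ok X (gtgt X f) p u" using assms(2) by simp
  ultimately have "tensor_eq (push_word (cross_edge (q @ [Elt (lam B z) g']) e' c') p)
                             (push_word (cross_edge (q @ [Elt (lam B z) g]) e c) p)"
    unfolding cross_edge_def by (simp add: push_word_tensor_eq)
  then show ?thesis unfolding push .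
qed

lemma push_word_edge_rev:
  assumes "tensor_ok (q, z, b)" "x \<in> gedges X" "gsrc X x = rho B z"
  shows "tensor_eq (push_word (q, z, b) [Edg x, Edg (grev X x)]) (q, z, b)"
proof -
  have xel: "x \<in> gel X" using edges_in_el[OF assms(2)] .
  have ok_x: "ok X (rho B z) [Edg x, Edg (grev X x)] (gsrc X x)"
    using assms(2,3) rev_in_edges[OF graph_X assms(2)] tgt_rev[OF graph_X xel] src_in_verts[OF graph_X xel]
    by (simp add: gtgt_def)
  have ok_back: "ok X (gtgt X x) [Edg (grev X x)] (gsrc X x)"
    using rev_in_edges[OF graph_X assms(2)] tgt_rev[OF graph_X xel] src_in_verts[OF graph_X xel]
    by (simp add: gtgt_def)
  obtain e g c where d: "edge_decomp z x b e g c"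
    and push: "push_word (q, z, b) [Edg x, Edg (grev X x)]
               = push_word (cross_edge (q @ [Elt (lam B z) g]) e c) [Edg (grev X x)]"
    using push_word_Edg[OF assms(1) ok_x] by metis
  have e: "e \<in> gedges (bgr B)" "rho B e = x" "gsrc (bgr B) e = z" "g \<in> carrier (ggrp Y (lam B z))"
    "c \<in> bset B e" "b = bl B z g (bm B e c)"
    using d unfolding edge_decomp_def by auto
  let ?q = "q @ [Elt (lam B z) g]" and ?t = "gtgt (bgr B) e"
  have ok_q: "ok Y dag ?q (lam B (gsrc (bgr B) e))"
    using assms(1) e lam_vert ok_append[OF graph_Y] by auto
  have cross_ok: "tensor_ok (?q @ gword Y (lam B e), ?t, bm B (grev (bgr B) e) (bb B e c))"
    and rho_t: "rho B ?t = gtgt X x"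
    using cross_edge_decomp_ok[OF assms(1) d] unfolding cross_edge_def by auto
  have "push_word (q, z, b) [Edg x, Edg (grev X x)]
        = push_word (?q @ gword Y (lam B e), ?t, bm B (grev (bgr B) e) (bb B e c)) [Edg (grev X x)]"
    using push unfolding cross_edge_def by simp
  also have "tensor_eq \<dots> (push_word (cross_edge ((?q @ gword Y (lam B e)) @
      [Elt (lam B ?t) \<one>\<^bsub>ggrp Y (lam B ?t)\<^esub>]) (grev (bgr B) e) (bb B e c)) [])"
  proof (rule push_word_decomp[OF cross_ok])
    show "ok X (rho B ?t) [Edg (grev X x)] (gsrc X x)" using ok_back rho_t by simp
    show "edge_decomp ?t (grev X x) (bm B (grev (bgr B) e) (bb B e c)) (grev (bgr B) e)
            \<one>\<^bsub>ggrp Y (lam B ?t)\<^esub> (bb B e c)"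
      using edge_decomp_rev[OF e(1,5)] e(2) by simp
  qed
  also have "tensor_eq \<dots> (?q, z, bm B e c)"
    using cross_edge_back[OF e(1,5) ok_q] e(3) by simp
  also have "tensor_eq \<dots> (q, z, b)"
  proof -
    have "bm B e c \<in> bset B z" using bm_closed[OF edges_in_el[OF e(1)] e(5)] e(3) by simp
    then show ?thesis using tensor_eq_sym[OF tensor_eq_bl[of q z "bm B e c" g]] assms(1) e by simp
  qed
  finally show ?thesis .
qed

lemma push_word_edge_slide:
  assumes "tensor_ok (q, z, b)" "x \<in> gedges X" "gsrc X x = rho B z" "h \<in> carrier (ggrp X x)"
  shows "tensor_eq (push_word (q, z, b) [Elt (rho B z) (ghm X x h), Edg x])
                   (push_word (q, z, b) [Edg x, Elt (gtgt X x) (ghm X (grev X x) (gbr X x h))])"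
proof -
  have xel: "x \<in> gel X" using edges_in_el[OF assms(2)] .
  have zel: "z \<in> gel (bgr B)" using assms(1) by (simp add: verts_in_el)
  have ok_x: "ok X (rho B z) [Edg x, Elt (gtgt X x) (ghm X (grev X x) (gbr X x h))] (gtgt X x)"
    using assms tgt_in_verts[OF graph_X xel] gog_hm_carrier[OF X rev_in_el[OF graph_X xel]]
      gog_br_carrier[OF X xel] by (simp add: gtgt_def)
  obtain e g c where d: "edge_decomp z x b e g c"
    and push: "push_word (q, z, b) [Edg x, Elt (gtgt X x) (ghm X (grev X x) (gbr X x h))]
      = push_word (cross_edge (q @ [Elt (lam B z) g]) e c) [Elt (gtgt X x) (ghm X (grev X x) (gbr X x h))]"
    using push_word_Edg[OF assms(1) ok_x] by metis
  have e: "e \<in> gel (bgr B)" "rho B e = x" "gsrc (bgr B) e = z" "g \<in> carrier (ggrp Y (lam B z))"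
    "c \<in> bset B e" "b = bl B z g (bm B e c)"
    using d edges_in_el unfolding edge_decomp_def by auto
  have hx: "ghm X x h \<in> carrier (ggrp X (rho B z))" using gog_hm_carrier[OF X xel assms(4)] assms(3) by simp
  have h: "h \<in> carrier (ggrp X (rho B e))" using assms(4) e(2) by simp
  text \<open>Right multiplication by h^- commutes with the decomposition, and by h^+ with crossing e.\<close>
  have "br B z b (ghm X x h) = bl B z g (bm B e (br B e c h))"
  proof -
    have "bm B e c \<in> bset B z" using bm_closed[OF e(1,5)] e(3) by simp
    then show ?thesis using e bl_br[OF zel e(4) hx] bm_br[OF e(1) h e(5)] by simp
  qed
  then have d': "edge_decomp z x (br B z b (ghm X x h)) e g (br B e c h)"
    using d br_closed[OF e(1) h e(5)] unfolding edge_decomp_def by simp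
  have "bm B (grev (bgr B) e) (bb B e (br B e c h))
     = br B (gtgt (bgr B) e) (bm B (grev (bgr B) e) (bb B e c)) (ghm X (grev X x) (gbr X x h))"
    using bb_br[OF e(1) h e(5)] bm_br[OF rev_in_el[OF graph_B e(1)] _ bb_closed[OF e(1,5)]]
      gog_br_carrier[OF X xel assms(4)] morphism_rev[OF rho_morphism e(1)] e(2)
    by (simp add: gtgt_def)
  then have cross: "push_word (cross_edge (q @ [Elt (lam B z) g]) e (br B e c h)) []
           = push_word (q, z, b) [Edg x, Elt (gtgt X x) (ghm X (grev X x) (gbr X x h))]"
    unfolding push cross_edge_def by simp
  have "push_word (q, z, b) [Elt (rho B z) (ghm X x h), Edg x] = push_word (q, z, br B z b (ghm X x h)) [Edg x]"
    by simp
  also have "tensor_eq \<dots> (push_word (cross_edge (q @ [Elt (lam B z) g]) e (br B e c h)) [])"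
  proof (rule push_word_decomp[OF _ _ d'])
    show "tensor_ok (q, z, br B z b (ghm X x h))" using assms(1) br_closed[OF zel hx] by simp
    show "ok X (rho B z) [Edg x] (gtgt X x)" using assms(2,3) tgt_in_verts[OF graph_X xel] by simp
  qed
  finally show ?thesis unfolding cross .
qed

lemma push_word_grel:
  assumes "tensor_ok (q, z, b)" "grel X l r" "ok X (rho B z) l u"
  shows "tensor_eq (push_word (q, z, b) l) (push_word (q, z, b) r)"
  using assms(2)
proof (cases rule: grel.cases)
  case (mult v g h)
  have zel: "z \<in> gel (bgr B)" using assms(1) by (simp add: verts_in_el)
  have "v = rho B z" "g \<in> carrier (ggrp X (rho B z))" "h \<in> carrier (ggrp X (rho B z))"
    using assms(3) mult by auto
  moreover have "tensor_ok (q, z, br B z (br B z b g) h)"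
    using assms(1) calculation br_closed[OF zel] by simp
  ultimately show ?thesis using mult br_mult[OF zel] assms(1) tensor_eq_refl by simp
next
  case (unit v)
  then show ?thesis using assms br_one[OF verts_in_el] tensor_eq_refl by auto
next
  case (inv x)
  with assms(3) have "x \<in> gedges X" "gsrc X x = rho B z" by auto
  with inv show ?thesis using push_word_edge_rev[OF assms(1)] by simp
next
  case (edge x h)
  with assms(3) have "x \<in> gedges X" "gsrc X x = rho B z" by auto
  with edge show ?thesis using push_word_edge_slide[OF assms(1)] by simp
qed

lemma push_word_wstep:
  assumes "tensor_ok (q, z, b)" "wstep X (rho B z) p p'"
  shows "tensor_eq (push_word (q, z, b) p) (push_word (q, z, b) p')"
proof -
  obtain a l r w t where rel: "grel X l r" and p: "p = a @ l @ w" "p' = a @ r @ w"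
    and ok_p: "ok X (rho B z) (a @ l @ w) t"
    using assms(2) unfolding wstep_def by blast
  then obtain m m' where ok: "ok X (rho B z) a m" "ok X m l m'" "ok X m' w t"
    using ok_append[OF graph_X] by auto
  obtain q1 z1 b1 where p1: "push_word (q, z, b) a = (q1, z1, b1)" by (metis prod_cases3)
  have t1: "tensor_ok (q1, z1, b1)" "rho B z1 = m" using push_word_ok[OF assms(1) ok(1) p1] by auto
  obtain q2 z2 b2 where p2: "push_word (q1, z1, b1) l = (q2, z2, b2)" by (metis prod_cases3)
  obtain q3 z3 b3 where p3: "push_word (q1, z1, b1) r = (q3, z3, b3)" by (metis prod_cases3)
  have "tensor_ok (q2, z2, b2)" "rho B z2 = m'"
    using push_word_ok[OF t1(1) _ p2] ok(2) t1(2) by auto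
  have eq: "tensor_eq (q2, z2, b2) (q3, z3, b3)"
    using push_word_grel[OF t1(1) rel] ok(2) t1(2) p2 p3 by simp
  then have "z3 = z2" by (simp add: tensor_eq_iff)
  with eq have "tensor_eq (push_word (q2, z2, b2) w) (push_word (q3, z3, b3) w)"
    using push_word_tensor_eq ok(3) \<open>rho B z2 = m'\<close> by simp
  then show ?thesis using p p1 p2 p3 by (simp add: push_word_append)
qed

lemma brep_ok_iff [simp]:
  "brep_ok Y X B dag st (q, z, b, p) \<longleftrightarrow> tensor_ok (q, z, b) \<and> ok X (rho B z) p st"
  unfolding brep_ok_def by simp

definition reduce :: "('z,'y,'x,'b,'g,'h) brep \<Rightarrow> ('y,'g) letter list \<times> 'z \<times> 'b" where
  "reduce t = (case t of (q, z, b, p) \<Rightarrow> push_word (q, z, b) p)"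

lemma reduce_simp [simp]: "reduce (q, z, b, p) = push_word (q, z, b) p"
  unfolding reduce_def by simp

lemma reduce_ok: assumes "brep_ok Y X B dag st t" shows "tensor_ok (reduce t)"
proof -
  obtain q z b p where t: "t = (q, z, b, p)" by (metis prod_cases4)
  obtain q' z' b' where "push_word (q, z, b) p = (q', z', b')" by (metis prod_cases3)
  then show ?thesis using push_word_ok[of q z b p st] assms t by simp
qed

lemma push_word_edge_relation:
  assumes "e \<in> gedges (bgr B)" "c \<in> bset B e" "ok Y dag q (lam B (gsrc (bgr B) e))"
    and "ok X (rho B (gsrc (bgr B) e)) p u"
  shows "tensor_eq (push_word (cross_edge q e c) (gword X (grev X (rho B e)) @ p))
                   (push_word (q, gsrc (bgr B) e, bm B e c) p)"
proof -
  have eel: "e \<in> gel (bgr B)" using edges_in_el[OF assms(1)] .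
  let ?t = "gtgt (bgr B) e" and ?f = "grev X (rho B e)"
  have f: "?f \<in> gedges X" using rev_in_edges[OF graph_X rho_edge[OF assms(1)]] .
  have "gtgt X ?f = rho B (gsrc (bgr B) e)"
    using tgt_rev[OF graph_X morphism_el[OF rho_morphism eel]] morphism_src[OF rho_morphism eel] by simp
  moreover have "gsrc X ?f = rho B ?t"
    using morphism_tgt[OF rho_morphism graph_B eel] by (simp add: gtgt_def)
  ultimately have ok_p: "ok X (rho B ?t) (Edg ?f # p) u" using f assms(4) by simp
  have ok_c: "tensor_ok (q @ gword Y (lam B e), ?t, bm B (grev (bgr B) e) (bb B e c))"
    using cross_edge_ok[OF eel assms(2,3)] unfolding cross_edge_def .
  have back_eq: "cross_edge (q @ gword Y (lam B e) @ [Elt (lam B ?t) \<one>\<^bsub>ggrp Y (lam B ?t)\<^esub>]) (grev (bgr B) e) (bb B e c)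
    = (q @ gword Y (lam B e) @ Elt (lam B ?t) \<one>\<^bsub>ggrp Y (lam B ?t)\<^esub> # gword Y (lam B (grev (bgr B) e)),
       gsrc (bgr B) e, bm B e c)"
    using tgt_rev[OF graph_B eel] rev_rev[OF graph_B eel] bb_bb[OF eel assms(2)]
    unfolding cross_edge_def by simp
  have "gword X ?f = [Edg ?f]" using f unfolding gword_def gedges_def by auto
  then have "push_word (cross_edge q e c) (gword X ?f @ p)
           = push_word (q @ gword Y (lam B e), ?t, bm B (grev (bgr B) e) (bb B e c)) (Edg ?f # p)"
    unfolding cross_edge_def by simp
  also have "tensor_eq \<dots> (push_word (cross_edge (q @ gword Y (lam B e) @ [Elt (lam B ?t) \<one>\<^bsub>ggrp Y (lam B ?t)\<^esub>])
                                 (grev (bgr B) e) (bb B e c)) p)"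
    using push_word_decomp[OF ok_c ok_p edge_decomp_rev[OF assms(1,2)]] by simp
  also have "tensor_eq \<dots> (push_word (q, gsrc (bgr B) e, bm B e c) p)"
    using push_word_tensor_eq[OF _ assms(4)] cross_edge_back[OF assms(1-3)] unfolding back_eq by simp
  finally show ?thesis .
qed

lemma reduce_bstep:
  assumes "bstep Y X B dag st t t'" shows "tensor_eq (reduce t) (reduce t')"
proof -
  have ok: "brep_ok Y X B dag st t" "brep_ok Y X B dag st t'" and step: "bstep_raw Y X B dag t t'"
    using assms unfolding bstep_def by auto
  from step show ?thesis
  proof (cases rule: bstep_raw.cases)
    case (left_word q q' z b p)
    moreover have "weq Y dag q q'" using left_word unfolding weq_def by blast
    ultimately have "tensor_eq (q, z, b) (q', z, b)" using ok tensor_eq_weq by simp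
    then show ?thesis using left_word ok push_word_tensor_eq[of q z b q' b p st] by simp
  next
    case (right_word z p p' q b)
    then show ?thesis using ok push_word_wstep by simp
  next
    case (left_tensor g z q b p)
    then have "tensor_eq (q @ [Elt (lam B z) g], z, b) (q, z, bl B z g b)"
      using ok tensor_eq_sym[OF tensor_eq_bl] by auto
    then show ?thesis using left_tensor ok push_word_tensor_eq[of _ z _ q _ p st] by simp
  next
    case (right_tensor h z q b p)
    then show ?thesis using tensor_eq_refl[OF reduce_ok[OF ok(2)]] by simp
  next
    case (edge e c q p)
    then have "tensor_eq (push_word (cross_edge q e c) (gword X (grev X (rho B e)) @ p))
                         (push_word (q, gsrc (bgr B) e, bm B e c) p)"
      using push_word_edge_relation[of e c q p st] ok by simp
    then show ?thesis using edge tensor_eq_sym unfolding cross_edge_def by simp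
  qed
qed

lemma beq_reduce:
  assumes "beq Y X B dag st t t'" "brep_ok Y X B dag st t"
  shows "tensor_eq (reduce t) (reduce t')"
  using assms(1) unfolding beq_def
proof (induction rule: rtranclp_induct)
  case base
  then show ?case using tensor_eq_refl[OF reduce_ok[OF assms(2)]] .
next
  case (step t' t'')
  then show ?case using reduce_bstep tensor_eq_sym tensor_eq_trans by blast
qed

lemma beq_weq:
  assumes "weq Y dag q q'" "brep_ok Y X B dag st (q, z, b, p)"
  shows "beq Y X B dag st (q, z, b, p) (q', z, b, p)"
  using assms(1) unfolding weq_def
proof (induction rule: rtranclp_induct)
  case (step q1 q2)
  have "ok Y dag q1 (lam B z)" using weq_ok[OF Y _ ] step(1) assms(2) unfolding weq_def by auto
  then have ok: "brep_ok Y X B dag st (q1, z, b, p)" "brep_ok Y X B dag st (q2, z, b, p)"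
    using step(2) wstep_ok_iff[OF Y] assms(2) by auto
  from step(2) have "beq Y X B dag st (q1, z, b, p) (q2, z, b, p)"
  proof
    assume w: "wstep Y dag q1 q2"
    have "bstep Y X B dag st (q1, z, b, p) (q2, z, b, p)"
      using ok bstep_raw.left_word[OF w] unfolding bstep_def by simp
    then show ?thesis by (rule bstep_beq)
  next
    assume w: "wstep Y dag q2 q1"
    have "bstep Y X B dag st (q2, z, b, p) (q1, z, b, p)"
      using ok bstep_raw.left_word[OF w] unfolding bstep_def by simp
    then show ?thesis by (rule bstep_beq_rev)
  qed
  with step(3) show ?case by (rule beq_trans)
qed (rule beq_refl)

lemma beq_cancel_edge_pair:
  assumes "brep_ok Y X B dag st (q, z, b, Edg (grev X f) # Edg f # p)" "f \<in> gedges X"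
  shows "beq Y X B dag st (q, z, b, Edg (grev X f) # Edg f # p) (q, z, b, p)"
proof (rule bstep_beq)
  have fel: "f \<in> gel X" using edges_in_el[OF assms(2)] .
  have ok: "brep_ok Y X B dag st (q, z, b, p)"
    using assms(1) rev_rev[OF graph_X fel] by (auto simp: gtgt_def)
  have "grel X [Edg (grev X f), Edg f] []"
    using grel.inv[OF rev_in_edges[OF graph_X assms(2)]] rev_rev[OF graph_X fel] by simp
  then have "wstep X (rho B z) (Edg (grev X f) # Edg f # p) p"
    using assms(1) ok unfolding wstep_def by (metis append.left_neutral append_Cons brep_ok_iff)
  then show "bstep Y X B dag st (q, z, b, Edg (grev X f) # Edg f # p) (q, z, b, p)"
    using assms(1) ok bstep_raw.right_word unfolding bstep_def by simp
qed

lemma beq_cross_edge: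
  assumes "brep_ok Y X B dag st (q, z, b, Edg f # p)" "edge_decomp z f b e g c"
  shows "beq Y X B dag st (q, z, b, Edg f # p)
           (q @ Elt (lam B z) g # gword Y (lam B e), gtgt (bgr B) e, bm B (grev (bgr B) e) (bb B e c), p)"
proof -
  have e: "e \<in> gedges (bgr B)" "gsrc (bgr B) e = z" "g \<in> carrier (ggrp Y (lam B z))" "c \<in> bset B e"
    "b = bl B z g (bm B e c)" "rho B e = f"
    using assms(2) unfolding edge_decomp_def by auto
  have f: "f \<in> gedges X" "gsrc X f = rho B z" "ok X (gtgt X f) p st" using assms(1) by auto
  let ?q = "q @ [Elt (lam B z) g]" and ?t = "gtgt (bgr B) e" and ?c = "bm B (grev (bgr B) e) (bb B e c)"
  have ok1: "brep_ok Y X B dag st (?q, z, bm B e c, Edg f # p)"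
    using assms(1) e bm_closed[OF edges_in_el e(4)] lam_vert ok_append[OF graph_Y] by auto
  have cross: "tensor_ok (?q @ gword Y (lam B e), ?t, ?c)" "rho B ?t = gtgt X f"
    using cross_edge_decomp_ok[OF _ assms(2)] assms(1) unfolding cross_edge_def by auto
  have ok2: "brep_ok Y X B dag st (?q @ gword Y (lam B e), ?t, ?c, Edg (grev X f) # Edg f # p)"
    using cross f rev_in_edges[OF graph_X f(1)] tgt_rev[OF graph_X edges_in_el[OF f(1)]]
    by (simp add: gtgt_def)
  have "bstep Y X B dag st (?q, z, bm B e c, Edg f # p) (q, z, b, Edg f # p)"
    using ok1 assms(1) e(5) bstep_raw.left_tensor[OF e(3)] unfolding bstep_def by simp
  then have "beq Y X B dag st (q, z, b, Edg f # p) (?q, z, bm B e c, Edg f # p)" by (rule bstep_beq_rev)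
  also have "beq Y X B dag st \<dots> (?q @ gword Y (lam B e), ?t, ?c, Edg (grev X f) # Edg f # p)"
  proof (rule bstep_beq)
    have "gword X (grev X (rho B e)) = [Edg (grev X f)]"
      using e(6) rev_in_edges[OF graph_X f(1)] unfolding gword_def gedges_def by auto
    moreover have "bstep_raw Y X B dag (?q, gsrc (bgr B) e, bm B e c, Edg f # p)
      (?q @ gword Y (lam B e), ?t, ?c, gword X (grev X (rho B e)) @ Edg f # p)"
      by (rule bstep_raw.edge[OF e(1,4)])
    ultimately show "bstep Y X B dag st (?q, z, bm B e c, Edg f # p)
                       (?q @ gword Y (lam B e), ?t, ?c, Edg (grev X f) # Edg f # p)"
      using ok1 ok2 e(2) unfolding bstep_def by simp
  qed
  also have "beq Y X B dag st \<dots> (?q @ gword Y (lam B e), ?t, ?c, p)"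
    using beq_cancel_edge_pair[OF ok2 f(1)] .
  finally show ?thesis by simp
qed

lemma beq_normal_form:
  assumes "brep_ok Y X B dag st (q, z, b, p)" "push_word (q, z, b) p = (q', z', b')"
  shows "beq Y X B dag st (q, z, b, p) (q', z', b', [])"
  using assms
proof (induction p arbitrary: q z b)
  case Nil
  then show ?case by (simp add: beq_refl)
next
  case (Cons l p)
  show ?case
  proof (cases l)
    case (Elt y h)
    with Cons.prems(1) have h: "y = rho B z" "h \<in> carrier (ggrp X (rho B z))" by auto
    then have ok: "brep_ok Y X B dag st (q, z, br B z b h, p)"
      using Cons.prems(1) Elt br_closed[OF verts_in_el] by auto
    moreover have "bstep_raw Y X B dag (q, z, br B z b h, p) (q, z, b, Elt (rho B z) h # p)"
      by (rule bstep_raw.right_tensor[OF h(2)])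
    ultimately have "bstep Y X B dag st (q, z, br B z b h, p) (q, z, b, l # p)"
      using Cons.prems(1) Elt h(1) unfolding bstep_def by simp
    then have "beq Y X B dag st (q, z, b, l # p) (q, z, br B z b h, p)" by (rule bstep_beq_rev)
    also have "beq Y X B dag st \<dots> (q', z', b', [])" using Cons.IH[OF ok] Cons.prems(2) Elt by simp
    finally show ?thesis .
  next
    case (Edg f)
    obtain e g c where d: "edge_decomp z f b e g c"
      and push: "push_word (q, z, b) (Edg f # p) = push_word (cross_edge (q @ [Elt (lam B z) g]) e c) p"
      using push_word_Edg Cons.prems(1) Edg by (metis brep_ok_iff)
    have "tensor_ok (cross_edge (q @ [Elt (lam B z) g]) e c)" "rho B (gtgt (bgr B) e) = gtgt X f"
      using cross_edge_decomp_ok[OF _ d] Cons.prems(1) by auto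
    then have ok: "brep_ok Y X B dag st (q @ Elt (lam B z) g # gword Y (lam B e), gtgt (bgr B) e,
                                         bm B (grev (bgr B) e) (bb B e c), p)"
      using Cons.prems(1) Edg unfolding cross_edge_def by auto
    have "beq Y X B dag st (q, z, b, l # p) (q @ Elt (lam B z) g # gword Y (lam B e), gtgt (bgr B) e,
                                               bm B (grev (bgr B) e) (bb B e c), p)"
      using beq_cross_edge[OF _ d] Cons.prems(1) Edg by simp
    also have "beq Y X B dag st \<dots> (q', z', b', [])"
      using Cons.IH[OF ok] Cons.prems(2) Edg push unfolding cross_edge_def by simp
    finally show ?thesis .
  qed
qed

lemma reduce_bact:
  "reduce (bact \<gamma> t) = (case reduce t of (q', z', b') \<Rightarrow> (\<gamma> @ q', z', b'))"
  by (cases t) (simp add: bact_def push_word_prepend)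

lemma brep_ok_bact:
  "ok Y dag \<gamma> dag \<Longrightarrow> brep_ok Y X B dag st t \<Longrightarrow> brep_ok Y X B dag st (bact \<gamma> t)"
  by (cases t) (auto simp: bact_def ok_append[OF graph_Y])

theorem fundamental_biset_left_free:
  assumes "left_free_gob Y X B"
  shows "fbiset_left_free Y X B dag st"
  unfolding fbiset_left_free_def
proof (intro allI impI)
  fix \<gamma> t
  assume \<gamma>: "ok Y dag \<gamma> dag" and t: "brep_ok Y X B dag st t" and loop: "beq Y X B dag st (bact \<gamma> t) t"
  obtain q z b where r: "reduce t = (q, z, b)" by (metis prod_cases3)
  have ok: "tensor_ok (q, z, b)" using reduce_ok[OF t] r by simp
  have "tensor_eq (\<gamma> @ q, z, b) (q, z, b)"
    using beq_reduce[OF loop brep_ok_bact[OF \<gamma> t]] reduce_bact r by simp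
  then obtain g where g: "g \<in> carrier (ggrp Y (lam B z))" "b = bl B z g b"
    and w: "weq Y dag ((\<gamma> @ q) @ [Elt (lam B z) g]) q"
    unfolding tensor_eq_iff by auto
  have "\<forall>z\<in>gel (bgr B). \<forall>g\<in>carrier (ggrp Y (lam B z)). \<forall>b\<in>bset B z.
          bl B z g b = b \<longrightarrow> g = \<one>\<^bsub>ggrp Y (lam B z)\<^esub>"
    using assms unfolding left_free_gob_def by blast
  moreover have "z \<in> gel (bgr B)" "b \<in> bset B z" using ok by (simp_all add: verts_in_el)
  ultimately have "g = \<one>\<^bsub>ggrp Y (lam B z)\<^esub>" using g by metis
  moreover have "ok Y dag (\<gamma> @ q) (lam B z)" using \<gamma> ok ok_append[OF graph_Y] by auto
  ultimately have "weq Y dag (\<gamma> @ q) ((\<gamma> @ q) @ [Elt (lam B z) g])"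
    using weq_sym[OF weq_unit[OF Y, of dag "\<gamma> @ q" "lam B z" "[]"]] ok lam_vert by simp
  then have "weq Y dag (\<gamma> @ q) ([] @ q)" using w by (simp add: weq_trans)
  moreover have "ok Y dag q (lam B z)" using ok by simp
  ultimately show "weq Y dag \<gamma> []" using weq_cancel_right[OF Y \<gamma>, of q "lam B z" "[]"] by simp
qed

definition left_orbit_rel :: "'z \<Rightarrow> ('b \<times> 'b) set" where
  "left_orbit_rel z = {(b, b'). b \<in> bset B z \<and> b' \<in> bset B z \<and> (\<exists>g\<in>carrier (ggrp Y (lam B z)). b' = bl B z g b)}"

definition orbit_label :: "('z,'y,'x,'b,'g,'h) brep \<Rightarrow> 'z \<times> 'b set" where
  "orbit_label t = (case reduce t of (q, z, b) \<Rightarrow> (z, left_orbit_rel z `` {b}))"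

lemma left_orbit_rel_equiv: "z \<in> gel (bgr B) \<Longrightarrow> equiv (bset B z) (left_orbit_rel z)"
  unfolding left_orbit_rel_def by (rule biset_orbit_equiv[OF group_lam biset])

lemma orbit_label_eq_if_orbit:
  assumes "brep_ok Y X B dag st t" "ok Y dag \<gamma> dag" "beq Y X B dag st (bact \<gamma> t) t'"
  shows "orbit_label t = orbit_label t'"
proof -
  obtain q z b where r: "reduce t = (q, z, b)" by (metis prod_cases3)
  obtain q' z' b' where r': "reduce t' = (q', z', b')" by (metis prod_cases3)
  have "tensor_eq (\<gamma> @ q, z, b) (q', z', b')"
    using beq_reduce[OF assms(3) brep_ok_bact[OF assms(2,1)]] reduce_bact r r' by simp
  then obtain g where "z' = z" "z \<in> gverts (bgr B)" "b' \<in> bset B z" "b \<in> bset B z"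
    "g \<in> carrier (ggrp Y (lam B z))" "b = bl B z g b'"
    unfolding tensor_eq_iff by auto
  then have "(b', b) \<in> left_orbit_rel z" "z \<in> gel (bgr B)"
    unfolding left_orbit_rel_def by (auto simp: verts_in_el)
  then show ?thesis
    using equiv_class_eq[OF left_orbit_rel_equiv] r r' \<open>z' = z\<close> unfolding orbit_label_def by simp
qed

lemma beq_translate_normal_rep:
  assumes "tensor_ok (Q, Z, c)" "rho B Z = st" "ok Y dag Q' (lam B Z)" "g \<in> carrier (ggrp Y (lam B Z))"
  shows "beq Y X B dag st (Q' @ [Elt (lam B Z) g] @ word_inv Y Q @ Q, Z, c, []) (Q', Z, bl B Z g c, [])"
proof -
  have lZ: "lam B Z \<in> gverts Y" using assms(1) lam_vert by simp
  have st: "st \<in> gverts X" using assms(1,2) morphism_vert[OF rho_morphism] by auto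
  have Q'g: "ok Y dag (Q' @ [Elt (lam B Z) g]) (lam B Z)" using assms(3,4) lZ ok_append[OF graph_Y] by auto
  have "weq Y dag ((Q' @ [Elt (lam B Z) g]) @ word_inv Y Q @ Q @ []) ((Q' @ [Elt (lam B Z) g]) @ [])"
    using weq_inv_left[OF Y, of dag Q "lam B Z" dag "Q' @ [Elt (lam B Z) g]" "[]" "lam B Z"] Q'g assms(1) lZ
    by simp
  then have "weq Y dag (Q' @ [Elt (lam B Z) g] @ word_inv Y Q @ Q) (Q' @ [Elt (lam B Z) g])" by simp
  moreover have "brep_ok Y X B dag st (Q' @ [Elt (lam B Z) g] @ word_inv Y Q @ Q, Z, c, [])"
    using weq_ok[OF Y weq_sym[OF calculation] Q'g] assms(1,2) st by simp
  ultimately have "beq Y X B dag st (Q' @ [Elt (lam B Z) g] @ word_inv Y Q @ Q, Z, c, [])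
                                    (Q' @ [Elt (lam B Z) g], Z, c, [])"
    by (rule beq_weq)
  also have "bstep Y X B dag st (Q' @ [Elt (lam B Z) g], Z, c, []) (Q', Z, bl B Z g c, [])"
    using bstep_raw.left_tensor[OF assms(4)] Q'g assms bl_closed[OF verts_in_el] st
    unfolding bstep_def by simp
  then have "beq Y X B dag st (Q' @ [Elt (lam B Z) g], Z, c, []) (Q', Z, bl B Z g c, [])"
    by (rule bstep_beq)
  finally show ?thesis .
qed

lemma orbit_if_orbit_label_eq:
  assumes "brep_ok Y X B dag st t" "brep_ok Y X B dag st t'" "orbit_label t = orbit_label t'"
  shows "\<exists>\<gamma>. ok Y dag \<gamma> dag \<and> beq Y X B dag st (bact \<gamma> t) t'"
proof -
  obtain q z b p where t: "t = (q, z, b, p)" by (metis prod_cases4)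
  obtain q' z' b' p' where t': "t' = (q', z', b', p')" by (metis prod_cases4)
  obtain Q Z c where r: "push_word (q, z, b) p = (Q, Z, c)" by (metis prod_cases3)
  obtain Q' Z' c' where r': "push_word (q', z', b') p' = (Q', Z', c')" by (metis prod_cases3)
  have ok: "tensor_ok (Q, Z, c)" "rho B Z = st" "tensor_ok (Q', Z', c')" "rho B Z' = st"
    using push_word_ok[OF _ _ r] push_word_ok[OF _ _ r'] assms(1,2) t t' by auto
  have Zel: "Z \<in> gel (bgr B)" using ok(1) by (simp add: verts_in_el)
  have "Z' = Z" "left_orbit_rel Z `` {c} = left_orbit_rel Z `` {c'}"
    using assms(3) r r' t t' unfolding orbit_label_def by auto
  then have "(c, c') \<in> left_orbit_rel Z"
    using eq_equiv_class_iff[OF left_orbit_rel_equiv[OF Zel]] ok by simp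
  then obtain g where g: "g \<in> carrier (ggrp Y (lam B Z))" "c' = bl B Z g c"
    unfolding left_orbit_rel_def by auto
  let ?\<gamma> = "Q' @ [Elt (lam B Z) g] @ word_inv Y Q"
  have \<gamma>: "ok Y dag ?\<gamma> dag"
    using ok \<open>Z' = Z\<close> g word_inv_ok[OF Y] lam_vert ok_append[OF graph_Y] by auto
  have "brep_ok Y X B dag st (?\<gamma> @ q, z, b, p)" using brep_ok_bact[OF \<gamma> assms(1)] t by (simp add: bact_def)
  then have "beq Y X B dag st (bact ?\<gamma> t) (?\<gamma> @ Q, Z, c, [])"
    using beq_normal_form[of "?\<gamma> @ q" z b p] r push_word_prepend[of ?\<gamma> q z b p] t
    by (simp add: bact_def)
  also have "beq Y X B dag st \<dots> (Q', Z, c', [])"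
    using beq_translate_normal_rep[OF ok(1,2) _ g(1)] ok(3) \<open>Z' = Z\<close> g(2) by simp
  also have "beq Y X B dag st \<dots> t'"
    using beq_sym[OF beq_normal_form[OF _ r']] assms(2) t' \<open>Z' = Z\<close> by simp
  finally show ?thesis using \<gamma> by blast
qed

lemma orbit_label_image:
  assumes "dag \<in> gverts Y" "st \<in> gverts X"
  shows "orbit_label ` {t. brep_ok Y X B dag st t} = fiber_orbits Y X B st"
proof -
  have fiber: "fiber_orbits Y X B st = (SIGMA z:{z \<in> gel (bgr B). rho B z = st}. bset B z // left_orbit_rel z)"
    unfolding fiber_orbits_def left_orbit_rel_def ..
  show ?thesis
  proof
    show "orbit_label ` {t. brep_ok Y X B dag st t} \<subseteq> fiber_orbits Y X B st"
    proof (rule image_subsetI)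
      fix t assume "t \<in> {t. brep_ok Y X B dag st t}"
      moreover obtain q z b p where t: "t = (q, z, b, p)" by (metis prod_cases4)
      ultimately have t: "tensor_ok (q, z, b)" "ok X (rho B z) p st" by simp_all
      obtain Q Z c where r: "push_word (q, z, b) p = (Q, Z, c)" by (metis prod_cases3)
      have "tensor_ok (Q, Z, c)" "rho B Z = st" using push_word_ok[OF t r] by simp_all
      then show "orbit_label t \<in> fiber_orbits Y X B st"
        using r \<open>t = (q, z, b, p)\<close> unfolding fiber orbit_label_def by (auto simp: verts_in_el quotientI)
    qed
    show "fiber_orbits Y X B st \<subseteq> orbit_label ` {t. brep_ok Y X B dag st t}"
    proof
      fix y assume "y \<in> fiber_orbits Y X B st"
      then obtain z b where y: "y = (z, left_orbit_rel z `` {b})" "z \<in> gel (bgr B)" "rho B z = st" "b \<in> bset B z"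
        unfolding fiber by (auto elim: quotientE)
      have z: "z \<in> gverts (bgr B)"
      proof (rule ccontr)
        assume "z \<notin> gverts (bgr B)"
        then have "rho B z \<in> gedges X" using el_vert_or_edge[OF y(2)] rho_edge by simp
        then show False using y(3) assms(2) unfolding gverts_def gedges_def by simp
      qed
      have "connected Y" using Y unfolding is_gog_def by simp
      then obtain q where "ok Y dag q (lam B z)"
        using assms(1) lam_vert[OF z] unfolding connected_def by blast
      then have "brep_ok Y X B dag st (q, z, b, [])" using z y(3,4) assms(2) by simp
      moreover have "orbit_label (q, z, b, []) = y" using y unfolding orbit_label_def by simp
      ultimately show "y \<in> orbit_label ` {t. brep_ok Y X B dag st t}"
        by (intro image_eqI[where x = "(q, z, b, [])"]) (simp_all del: brep_ok_iff)
    qed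
  qed
qed

theorem fundamental_biset_orbits:
  assumes "dag \<in> gverts Y" "st \<in> gverts X"
  shows "fbiset_orbits Y X B dag st \<approx> fiber_orbits Y X B st"
proof -
  let ?A = "{t. brep_ok Y X B dag st t}"
  have "{(t, t'). brep_ok Y X B dag st t \<and> brep_ok Y X B dag st t' \<and>
           (\<exists>\<gamma>. ok Y dag \<gamma> dag \<and> beq Y X B dag st (bact \<gamma> t) t')}
        = {(t, t'). t \<in> ?A \<and> t' \<in> ?A \<and> orbit_label t = orbit_label t'}"
    by (blast dest: orbit_label_eq_if_orbit orbit_if_orbit_label_eq)
  then have "fbiset_orbits Y X B dag st = ?A // {(t, t'). t \<in> ?A \<and> t' \<in> ?A \<and> orbit_label t = orbit_label t'}"
    unfolding fbiset_orbits_def by simp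
  also have "\<dots> \<approx> orbit_label ` ?A" by (rule quotient_kernel_on_eqpoll)
  finally show ?thesis unfolding orbit_label_image[OF assms] .
qed

end

theorem mainTheorem17:
  fixes Y :: "('y,'g) gog" and X :: "('x,'h) gog" and B :: "('z,'y,'x,'b,'g,'h) gob"
    and dag :: 'y and st :: 'x
  assumes "is_gog Y" and "is_gog X" and "is_gob Y X B"
    and "left_free_gob Y X B"
    and "dag \<in> gverts Y" and "st \<in> gverts X"
  shows "fbiset_left_free Y X B dag st \<and> fbiset_orbits Y X B dag st \<approx> fiber_orbits Y X B st"
proof -
  interpret fibrant_gob Y X B dag st
    using assms(1-4) unfolding left_free_gob_def by unfold_locales simp_all
  show ?thesis
    using fundamental_biset_left_free[OF assms(4)] fundamental_biset_orbits[OF assms(5,6)] by blast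
qed

end
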